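(* Let $k=\mathbb{F}_q$ with $q=2^m\geq 4$. Let $B$ be a finite set and for each $i\in B$ let $C_i\subset\mathbb{P}^2_k$ be a conic over $k$ (smooth, a double line, a union of two distinct $k$-lines, or a union of two lines conjugate over the quadratic extension of $k$). Let $\mathcal{C}=\bigcup_{i\in B}C_i$ (disjoint union indexed by $B$) with natural map $h\colon\mathcal{C}\to B$, $C_i\mapsto i$, and let $\mathcal{C}(k)=\coprod_{i\in B}C_i(k)$. Let $\sigma$ be a permutation of $\mathcal{C}(k)$ such that (1) for every $i\in B$ there is $j\in B$ with $\sigma(C_i(k))=C_j(k)$, so that $\sigma$ induces a permutation $\sigma_B=h\sigma h^{-1}$ of $B$; and (2) each such bijection $C_i(k)\to C_j(k)$ is induced by an isomorphism of conics $C_i\to C_j$ over $k$. Then $\sigma$ and $\sigma_B$ have the same parity. *)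

theory Defs
  imports "HOL-Analysis.Analysis" "HOL-Combinatorics.Permutations"
begin

definition proj_point :: "('k::field)^3 \<Rightarrow> ('k^3) set" where
  "proj_point v = {c *s v | c. c \<noteq> 0}"

text \<open>Ternary quadratic forms (written as sums of monomials x_i x_j, valid in
  every characteristic, in particular characteristic 2).\<close>
definition is_quadratic_form :: "(('k::field)^3 \<Rightarrow> 'k) \<Rightarrow> bool" where
  "is_quadratic_form Q \<longleftrightarrow>
     (\<exists>A::'k^3^3. \<forall>v. Q v = (\<Sum>i\<in>UNIV. \<Sum>j\<in>UNIV. A$i$j * v$i * v$j))"

definition is_conic :: "(('k::field)^3 \<Rightarrow> 'k) \<Rightarrow> bool" where
  "is_conic Q \<longleftrightarrow> is_quadratic_form Q \<and> Q \<noteq> (\<lambda>_. 0)"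

definition conic_points :: "(('k::field)^3 \<Rightarrow> 'k) \<Rightarrow> ('k^3) set set" where
  "conic_points Q = {proj_point v | v. v \<noteq> 0 \<and> Q v = 0}"

definition conic_iso :: "(('k::field)^3 \<Rightarrow> 'k) \<Rightarrow> ('k^3 \<Rightarrow> 'k) \<Rightarrow> 'k^3^3 \<Rightarrow> bool" where
  "conic_iso Q Q' M \<longleftrightarrow> invertible M \<and> (\<exists>c. c \<noteq> 0 \<and> (\<forall>v. Q' (M *v v) = c * Q v))"

definition induced_perm ::
  "'b set \<Rightarrow> ('b \<Rightarrow> ('k::field)^3 \<Rightarrow> 'k) \<Rightarrow> ('b \<times> ('k^3) set \<Rightarrow> 'b \<times> ('k^3) set) \<Rightarrow> 'b \<Rightarrow> 'b" where
  "induced_perm B Q \<sigma> i =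
     (if i \<in> B then fst (\<sigma> (i, SOME P. P \<in> conic_points (Q i))) else i)"

end

theory Submission
  imports Defs
begin

text \<open>Every fibre \<open>C\<^sub>i(k)\<close> has an odd number of points (\<open>q + 1\<close>, \<open>2q + 1\<close> or \<open>1\<close>), and every
  automorphism of a conic over \<open>\<bbbF>\<^sub>q\<close>, \<open>q = 2\<^sup>m \<ge> 4\<close>, induces an even permutation of its points.
  In suitable coordinates it acts through a Moebius transformation of the projective line, and
  translations, scalings (squares, as every element is a square) and the inversion \<open>x \<mapsto> 1/x\<close>
  are even because \<open>4\<close> divides \<open>q\<close>. On a line pair the points off the vertex are fibred over
  the zeros of a binary form, with affine lines as fibres, and permuting the fibres is even
  because each fibre has an even number of points. Finally, composing \<open>\<sigma>\<close> with the exchange of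
  two fibres along a conic isomorphism changes the parity of both \<open>\<sigma>\<close> and \<open>\<sigma>\<^sub>B\<close>; repeating
  this until \<open>\<sigma>\<^sub>B\<close> is the identity leaves a product of automorphisms of the individual conics.\<close>

section \<open>Parity of permutations\<close>

lemma evenperm_transport:
  assumes "finite A" "inj_on f A" "p permutes A"
    and "\<And>x. x \<in> A \<Longrightarrow> p' (f x) = f (p x)" and "\<And>y. y \<notin> f ` A \<Longrightarrow> p' y = y"
  shows "p' permutes f ` A" "evenperm p' \<longleftrightarrow> evenperm p"
proof -
  have "p' = map_permutation A f p"
  proof
    fix y show "p' y = map_permutation A f p y"
      using assms(2-5) permutes_in_image[OF assms(3)]
      by (cases "y \<in> f ` A") (auto simp: map_permutation_def)
  qed
  then show "p' permutes f ` A" "evenperm p' \<longleftrightarrow> evenperm p"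
    using map_permutation_permutes[OF inj_on_imp_bij_betw[OF assms(2)] assms(3)]
      evenperm_map_permutation[OF assms(2,3,1)] by simp_all
qed

lemma permutes_involution:
  assumes "\<And>x. p (p x) = x" "\<And>x. x \<notin> S \<Longrightarrow> p x = x"
  shows "p permutes S"
  unfolding permutes_def by (metis assms)

lemma involution_transpose:
  assumes inv: "\<And>y. p (p y) = y" and "p x \<noteq> x"
  defines "p' \<equiv> Transposition.transpose x (p x) \<circ> p"
  shows "\<And>y. p' (p' y) = y" "{y. p' y \<noteq> y} = {y. p y \<noteq> y} - {x, p x}"
proof -
  have eq: "p y = x \<longleftrightarrow> y = p x" "p y = p x \<longleftrightarrow> y = x" for y by (metis inv)+
  then have p': "p' y = (if y = x \<or> y = p x then y else p y)" for y
    by (auto simp: p'_def inv)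
  show "p' (p' y) = y" for y by (auto simp: p' inv eq)
  show "{y. p' y \<noteq> y} = {y. p y \<noteq> y} - {x, p x}" by (auto simp: p')
qed

lemma evenperm_involution:
  assumes "finite S" "p permutes S" "\<And>x. p (p x) = x"
  shows "even (card {x. p x \<noteq> x})" "evenperm p \<longleftrightarrow> even (card {x. p x \<noteq> x} div 2)"
proof -
  have "even (card {x. p x \<noteq> x}) \<and> (evenperm p \<longleftrightarrow> even (card {x. p x \<noteq> x} div 2))"
    using assms(2,3)
  proof (induction "card {x. p x \<noteq> x}" arbitrary: p rule: less_induct)
    case less
    show ?case
    proof (cases "\<exists>x. p x \<noteq> x")
      case False
      then have "p = id" by auto
      then show ?thesis by simp
    next
      case True
      then obtain x where x: "p x \<noteq> x" by blast
      define p' where "p' = Transposition.transpose x (p x) \<circ> p"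
      note p' = involution_transpose[OF less.prems(2) x, folded p'_def]
      have "x \<in> S" "p x \<in> S"
        using x less.prems(1) by (metis permutes_not_in, metis permutes_not_in permutes_in_image)
      then have p'S: "p' permutes S"
        unfolding p'_def by (rule permutes_compose[OF less.prems(1) permutes_swap_id])
      have fin: "finite {y. p y \<noteq> y}"
        by (rule finite_subset[OF _ assms(1)]) (use less.prems(1) in \<open>auto simp: permutes_def\<close>)
      have sub: "{x, p x} \<subseteq> {y. p y \<noteq> y}" using x less.prems(2)[of x] by auto
      have card: "card {y. p y \<noteq> y} = card {y. p' y \<noteq> y} + 2"
        using card_Diff_subset[OF _ sub] card_mono[OF fin sub] x fin unfolding p'(2) by auto
      then have IH: "even (card {y. p' y \<noteq> y}) \<and>
          (evenperm p' \<longleftrightarrow> even (card {y. p' y \<noteq> y} div 2))"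
        using less.hyps p'S p'(1) by simp
      have "evenperm (Transposition.transpose x (p x) \<circ> p') \<longleftrightarrow> \<not> evenperm p'"
        using evenperm_comp[OF permutation_swap_id permutes_imp_permutation[OF assms(1) p'S]] x
        by (simp add: evenperm_swap)
      moreover have "Transposition.transpose x (p x) \<circ> p' = p" by (simp add: p'_def o_assoc)
      ultimately have "evenperm p \<longleftrightarrow> \<not> evenperm p'" by simp
      then show ?thesis using IH card by simp
    qed
  qed
  then show "even (card {x. p x \<noteq> x})" "evenperm p \<longleftrightarrow> even (card {x. p x \<noteq> x} div 2)"
    by simp_all
qed

lemma evenperm_comp_odd:
  assumes "finite S" "p permutes S" "q permutes S" "\<not> evenperm q"
  shows "evenperm (p \<circ> q) \<longleftrightarrow> \<not> evenperm p"
  using evenperm_comp[OF permutes_imp_permutation[OF assms(1,2)]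
      permutes_imp_permutation[OF assms(1,3)]] assms(4)
  by simp

lemma evenperm_fibrewise:
  assumes "finite B" "\<And>i. i \<in> B \<Longrightarrow> finite (F i)"
    and "\<And>i. i \<in> B \<Longrightarrow> p i permutes F i" "\<And>i. i \<in> B \<Longrightarrow> evenperm (p i)"
  shows "(\<lambda>(i, x). (i, if i \<in> B then p i x else x)) permutes Sigma B F \<and>
    evenperm (\<lambda>(i, x). (i, if i \<in> B then p i x else x))"
  using assms
proof (induction B rule: finite_induct)
  case empty
  have "(\<lambda>(i, x). (i, if i \<in> {} then p i x else x)) = id" by (auto simp: fun_eq_iff)
  then show ?case by (metis permutes_id evenperm_id)
next
  case (insert a B)
  define r where "r = (\<lambda>(i, x). (i, if i \<in> B then p i x else x))"
  define s where "s = (\<lambda>(i, x). (i, if i = a then p a x else x))"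
  have r: "r permutes Sigma B F" "evenperm r"
    using insert.IH insert.prems by (simp_all add: r_def)
  have pa: "p a permutes F a" "evenperm (p a)" "finite (F a)" using insert.prems by simp_all
  have "s (a, x) = (a, p a x)" for x by (simp add: s_def)
  moreover have "s y = y" if "y \<notin> Pair a ` F a" for y
    using that permutes_not_in[OF pa(1)] by (auto simp: s_def image_iff split: prod.split)
  ultimately have s: "s permutes Pair a ` F a" "evenperm s \<longleftrightarrow> evenperm (p a)"
    using evenperm_transport[OF pa(3) _ pa(1), of "Pair a" s] by (simp_all add: inj_on_def)
  have fin: "finite (Sigma (insert a B) F)" using insert.hyps insert.prems by auto
  have rS: "r permutes Sigma (insert a B) F" by (rule permutes_subset[OF r(1)]) auto
  have sS: "s permutes Sigma (insert a B) F" by (rule permutes_subset[OF s(1)]) auto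
  have eq: "(\<lambda>(i, x). (i, if i \<in> insert a B then p i x else x)) = s \<circ> r"
    using insert.hyps by (auto simp: fun_eq_iff r_def s_def)
  have "evenperm (s \<circ> r)"
    using evenperm_comp[OF permutes_imp_permutation[OF fin sS] permutes_imp_permutation[OF fin rS]]
      s(2) pa(2) r(2) by simp
  then show ?case unfolding eq by (intro conjI permutes_compose[OF rS sS])
qed

lemma evenperm_lift:
  fixes \<tau> :: "'a \<Rightarrow> 'a"
  assumes "finite Z" "\<tau> permutes Z" "even CARD('b::finite)"
  shows "(\<lambda>(z, t::'b). (\<tau> z, t)) permutes Z \<times> UNIV \<and> evenperm (\<lambda>(z, t::'b). (\<tau> z, t))"
  using assms(2,1)
proof (induction \<tau> rule: permutes_induct)
  case id
  have "(\<lambda>(z, t::'b). (id z, t)) = id" by (auto simp: fun_eq_iff)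
  then show ?case by (metis permutes_id evenperm_id)
next
  case (swap a b p)
  define s where "s = (\<lambda>(z, t::'b). (Transposition.transpose a b z, t))"
  have fin: "finite (Z \<times> (UNIV :: 'b set))" using assms(1) by simp
  have sS: "s permutes Z \<times> UNIV"
    by (rule permutes_involution)
      (use swap.hyps in \<open>auto simp: s_def intro!: transpose_apply_other\<close>)
  have "{x. s x \<noteq> x} = {a, b} \<times> UNIV" using swap.hyps by (auto simp: s_def)
  then have "card {x. s x \<noteq> x} = 2 * CARD('b)" using swap.hyps by (simp add: card_cartesian_product)
  then have "evenperm s" using evenperm_involution[OF fin sS] assms(3) by (auto simp: s_def)
  have eq: "(\<lambda>(z, t::'b). ((Transposition.transpose a b \<circ> p) z, t)) = s \<circ> (\<lambda>(z, t). (p z, t))"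
    by (auto simp: s_def)
  have pS: "(\<lambda>(z, t::'b). (p z, t)) permutes Z \<times> UNIV" using swap.IH by blast
  have "evenperm (s \<circ> (\<lambda>(z, t). (p z, t)))"
    using evenperm_comp[OF permutes_imp_permutation[OF fin sS] permutes_imp_permutation[OF fin pS]]
      swap.IH \<open>evenperm s\<close> by simp
  then show ?case unfolding eq by (intro conjI permutes_compose[OF pS sS])
qed

section \<open>Permutations of a fibred set\<close>

lemma card_moved_comp_transpose_less:
  assumes "finite {k. \<tau> k \<noteq> k}" "inj \<tau>" "\<tau> i \<noteq> i"
  shows "card {k. (\<tau> \<circ> Transposition.transpose i (\<tau> i)) k \<noteq> k} < card {k. \<tau> k \<noteq> k}"
proof (rule psubset_card_mono[OF assms(1)])
  have "\<tau> (\<tau> i) \<noteq> \<tau> i" using assms(2,3) by (metis injD)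
  then show "{k. (\<tau> \<circ> Transposition.transpose i (\<tau> i)) k \<noteq> k} \<subset> {k. \<tau> k \<noteq> k}"
    using assms(3) by (auto simp: Transposition.transpose_def)
qed

locale fibred_groupoid =
  fixes B :: "'b set" and F :: "'b \<Rightarrow> 'a set" and adm :: "'b \<Rightarrow> 'b \<Rightarrow> ('a \<Rightarrow> 'a) \<Rightarrow> bool"
  assumes finite_base: "finite B"
    and finite_fibre: "i \<in> B \<Longrightarrow> finite (F i)"
    and odd_card_fibre: "i \<in> B \<Longrightarrow> odd (card (F i))"
    and adm_id: "i \<in> B \<Longrightarrow> adm i i id"
    and adm_image: "i \<in> B \<Longrightarrow> j \<in> B \<Longrightarrow> adm i j g \<Longrightarrow> x \<in> F i \<Longrightarrow> g x \<in> F j"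
    and adm_comp: "i \<in> B \<Longrightarrow> j \<in> B \<Longrightarrow> k \<in> B \<Longrightarrow> adm i j g \<Longrightarrow> adm j k h \<Longrightarrow> adm i k (h \<circ> g)"
    and adm_inverse: "i \<in> B \<Longrightarrow> j \<in> B \<Longrightarrow> adm i j g \<Longrightarrow>
      \<exists>g'. adm j i g' \<and> (\<forall>x\<in>F i. g' (g x) = x) \<and> (\<forall>y\<in>F j. g (g' y) = y)"
    and adm_even: "i \<in> B \<Longrightarrow> adm i i g \<Longrightarrow> evenperm (restrict_id g (F i))"
begin

definition fibred_over :: "('b \<times> 'a \<Rightarrow> 'b \<times> 'a) \<Rightarrow> ('b \<Rightarrow> 'b) \<Rightarrow> bool" where
  "fibred_over \<sigma> \<tau> \<longleftrightarrow> (\<forall>i\<in>B. \<exists>g. adm i (\<tau> i) g \<and> (\<forall>x\<in>F i. \<sigma> (i, x) = (\<tau> i, g x)))"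

lemma adm_bij_betw:
  assumes "i \<in> B" "j \<in> B" "adm i j g"
  shows "bij_betw g (F i) (F j)"
proof -
  obtain g' where "adm j i g'" "\<forall>x\<in>F i. g' (g x) = x" "\<forall>y\<in>F j. g (g' y) = y"
    using adm_inverse[OF assms] by blast
  then show ?thesis
    using adm_image assms by (intro bij_betw_byWitness[where f'=g']) blast+
qed

lemma evenperm_fibred_over_id:
  assumes "\<sigma> permutes Sigma B F" "fibred_over \<sigma> id"
  shows "evenperm \<sigma>"
proof -
  obtain g where g: "\<And>i. i \<in> B \<Longrightarrow> adm i i (g i) \<and> (\<forall>x\<in>F i. \<sigma> (i, x) = (i, g i x))"
    using assms(2) unfolding fibred_over_def id_def by metis
  have "\<sigma> = (\<lambda>(i, x). (i, if i \<in> B then restrict_id (g i) (F i) x else x))"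
  proof
    fix y :: "'b \<times> 'a"
    obtain i x where y: "y = (i, x)" by force
    show "\<sigma> y = (\<lambda>(i, x). (i, if i \<in> B then restrict_id (g i) (F i) x else x)) y"
      using g permutes_not_in[OF assms(1), of y] by (cases "x \<in> F i") (auto simp: y)
  qed
  moreover have "restrict_id (g i) (F i) permutes F i" if "i \<in> B" for i
    using permutes_restrict_id adm_bij_betw g that by blast
  ultimately show ?thesis
    using evenperm_fibrewise[OF finite_base finite_fibre] adm_even g by simp
qed

lemma fibred_over_comp:
  assumes "fibred_over \<psi> \<tau>\<^sub>1" "fibred_over \<sigma> \<tau>\<^sub>2"
    and "\<tau>\<^sub>1 ` B \<subseteq> B" "\<tau>\<^sub>2 ` B \<subseteq> B"
  shows "fibred_over (\<sigma> \<circ> \<psi>) (\<tau>\<^sub>2 \<circ> \<tau>\<^sub>1)"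
  unfolding fibred_over_def
proof
  fix i assume i: "i \<in> B"
  obtain g where g: "adm i (\<tau>\<^sub>1 i) g" "\<forall>x\<in>F i. \<psi> (i, x) = (\<tau>\<^sub>1 i, g x)"
    using assms(1) i unfolding fibred_over_def by blast
  have j: "\<tau>\<^sub>1 i \<in> B" using assms(3) i by blast
  obtain h where h: "adm (\<tau>\<^sub>1 i) (\<tau>\<^sub>2 (\<tau>\<^sub>1 i)) h"
    "\<forall>x\<in>F (\<tau>\<^sub>1 i). \<sigma> (\<tau>\<^sub>1 i, x) = (\<tau>\<^sub>2 (\<tau>\<^sub>1 i), h x)"
    using assms(2) j unfolding fibred_over_def by blast
  have "adm i (\<tau>\<^sub>2 (\<tau>\<^sub>1 i)) (h \<circ> g)"
    using adm_comp[OF i j _ g(1) h(1)] assms(4) j by blast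
  moreover have "(\<sigma> \<circ> \<psi>) (i, x) = ((\<tau>\<^sub>2 \<circ> \<tau>\<^sub>1) i, (h \<circ> g) x)" if "x \<in> F i" for x
    using g(2) h(2) adm_image[OF i j g(1) that] that by simp
  ultimately show "\<exists>f. adm i ((\<tau>\<^sub>2 \<circ> \<tau>\<^sub>1) i) f \<and>
      (\<forall>x\<in>F i. (\<sigma> \<circ> \<psi>) (i, x) = ((\<tau>\<^sub>2 \<circ> \<tau>\<^sub>1) i, f x))"
    by auto
qed

text \<open>Exchanging two fibres of odd cardinality is a product of an odd number of transpositions.\<close>
lemma swap_fibres:
  assumes "i \<in> B" "j \<in> B" "i \<noteq> j" "adm i j g"
  obtains \<psi> where "\<psi> permutes Sigma B F" "\<not> evenperm \<psi>"
    "fibred_over \<psi> (Transposition.transpose i j)"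
proof -
  obtain g' where g': "adm j i g'" "\<forall>x\<in>F i. g' (g x) = x" "\<forall>y\<in>F j. g (g' y) = y"
    using adm_inverse[OF assms(1,2,4)] by blast
  have gF: "g x \<in> F j" if "x \<in> F i" for x using adm_image[OF assms(1,2,4) that] .
  have g'F: "g' y \<in> F i" if "y \<in> F j" for y using adm_image[OF assms(2,1) g'(1) that] .
  define \<psi> where "\<psi> = (\<lambda>(k, x). if k = i \<and> x \<in> F i then (j, g x)
    else if k = j \<and> x \<in> F j then (i, g' x) else (k, x))"
  have inv: "\<psi> (\<psi> y) = y" for y
    using assms(3) g' gF g'F by (auto simp: \<psi>_def split: prod.split)
  have perm: "\<psi> permutes Sigma B F"
    by (rule permutes_involution[OF inv]) (use assms(1,2) in \<open>auto simp: \<psi>_def split: if_splits\<close>)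
  have "{y. \<psi> y \<noteq> y} = Pair i ` F i \<union> Pair j ` F j"
    using assms(3) by (auto simp: \<psi>_def split: prod.splits if_splits)
  moreover have "card (F j) = card (F i)"
    using bij_betw_same_card[OF adm_bij_betw[OF assms(1,2,4)]] by simp
  moreover have "card (Pair i ` F i \<union> Pair j ` F j) = card (F i) + card (F j)"
    using assms(3) finite_fibre[OF assms(1)] finite_fibre[OF assms(2)]
    by (subst card_Un_disjoint) (auto simp: card_image inj_on_def)
  ultimately have "card {y. \<psi> y \<noteq> y} = 2 * card (F i)" by simp
  then have "\<not> evenperm \<psi>"
    using evenperm_involution(2)[OF _ perm inv] odd_card_fibre[OF assms(1)] finite_base
      finite_fibre by simp
  moreover have "fibred_over \<psi> (Transposition.transpose i j)"
    unfolding fibred_over_def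
  proof
    fix k assume k: "k \<in> B"
    consider "k = i" | "k = j" | "k \<noteq> i" "k \<noteq> j" by blast
    then show "\<exists>f. adm k (Transposition.transpose i j k) f \<and>
        (\<forall>x\<in>F k. \<psi> (k, x) = (Transposition.transpose i j k, f x))"
    proof cases
      case 1 then show ?thesis using assms(4) by (auto simp: \<psi>_def)
    next
      case 2 then show ?thesis using assms(3) g'(1) by (auto simp: \<psi>_def)
    next
      case 3 then show ?thesis using adm_id[OF k] by (auto simp: \<psi>_def)
    qed
  qed
  ultimately show ?thesis using perm that by blast
qed

text \<open>Induction on the number of points moved by \<open>\<tau>\<close>: composing \<open>\<sigma>\<close> with the exchange of the
  fibres \<open>i\<close> and \<open>\<tau> i\<close> along an admissible map flips its parity, because the fibres are odd, and
  makes the induced permutation fix \<open>\<tau> i\<close>.\<close>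
theorem evenperm_fibred:
  assumes "\<sigma> permutes Sigma B F" "\<tau> permutes B" "fibred_over \<sigma> \<tau>"
  shows "evenperm \<sigma> \<longleftrightarrow> evenperm \<tau>"
  using assms
proof (induction "card {i. \<tau> i \<noteq> i}" arbitrary: \<sigma> \<tau> rule: less_induct)
  case less
  show ?case
  proof (cases "\<tau> = id")
    case True
    then show ?thesis using evenperm_fibred_over_id less.prems by simp
  next
    case False
    then obtain i where "\<tau> i \<noteq> i" by (metis eq_id_iff)
    define j where "j = \<tau> i"
    have i: "i \<in> B" using \<open>\<tau> i \<noteq> i\<close> permutes_not_in[OF less.prems(2)] by blast
    have j: "j \<in> B" using permutes_in_image[OF less.prems(2)] i by (simp add: j_def)
    have ij: "i \<noteq> j" using \<open>\<tau> i \<noteq> i\<close> by (simp add: j_def)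
    obtain g where "adm i j g"
      using less.prems(3) i unfolding fibred_over_def j_def by blast
    then obtain \<psi> where \<psi>: "\<psi> permutes Sigma B F" "\<not> evenperm \<psi>"
      "fibred_over \<psi> (Transposition.transpose i j)"
      using swap_fibres i j ij by blast
    define \<tau>' where "\<tau>' = \<tau> \<circ> Transposition.transpose i j"
    have \<tau>': "\<tau>' permutes B"
      unfolding \<tau>'_def by (rule permutes_compose[OF permutes_swap_id[OF i j] less.prems(2)])
    have \<sigma>': "\<sigma> \<circ> \<psi> permutes Sigma B F" by (rule permutes_compose[OF \<psi>(1) less.prems(1)])
    have "fibred_over (\<sigma> \<circ> \<psi>) \<tau>'"
      unfolding \<tau>'_def
      by (rule fibred_over_comp[OF \<psi>(3) less.prems(3)])
        (use i j less.prems(2) in \<open>auto simp: permutes_image Transposition.transpose_def\<close>)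
    moreover have "finite {k. \<tau> k \<noteq> k}"
      by (rule finite_subset[OF _ finite_base]) (use less.prems(2) in \<open>auto simp: permutes_def\<close>)
    then have "card {k. \<tau>' k \<noteq> k} < card {k. \<tau> k \<noteq> k}"
      unfolding \<tau>'_def j_def
      by (rule card_moved_comp_transpose_less[OF _ permutes_inj[OF less.prems(2)] \<open>\<tau> i \<noteq> i\<close>])
    ultimately have "evenperm (\<sigma> \<circ> \<psi>) \<longleftrightarrow> evenperm \<tau>'"
      using less.hyps \<tau>' \<sigma>' by blast
    moreover have "evenperm (\<sigma> \<circ> \<psi>) \<longleftrightarrow> \<not> evenperm \<sigma>"
      using evenperm_comp_odd[OF _ less.prems(1) \<psi>(1,2)] finite_base finite_fibre by blast
    moreover have "evenperm \<tau>' \<longleftrightarrow> \<not> evenperm \<tau>"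
      unfolding \<tau>'_def using ij
      by (intro evenperm_comp_odd[OF finite_base less.prems(2) permutes_swap_id[OF i j]])
        (simp add: evenperm_swap)
    ultimately show ?thesis by blast
  qed
qed

end

section \<open>The projective line and Moebius transformations\<close>

text \<open>The projective line is modelled as \<open>'a option\<close>, with \<open>None\<close> the point \<open>(1 : 0)\<close> at infinity;
  \<open>p1_point x y\<close> is the point \<open>(x : y)\<close> (junk value \<open>None\<close> for \<open>(0, 0)\<close>) and \<open>p1_coords z\<close> its
  normalised homogeneous coordinates, which \<open>p1_scale x y\<close> multiplies back to \<open>(x, y)\<close>.\<close>
definition p1_point :: "'a::field \<Rightarrow> 'a \<Rightarrow> 'a option" where
  "p1_point x y = (if y = 0 then None else Some (x / y))"

definition p1_coords :: "'a::field option \<Rightarrow> 'a \<times> 'a" where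
  "p1_coords z = (case z of None \<Rightarrow> (1, 0) | Some t \<Rightarrow> (t, 1))"

definition p1_scale :: "'a::field \<Rightarrow> 'a \<Rightarrow> 'a" where
  "p1_scale x y = (if y = 0 then x else y)"

definition moebius :: "'a::field \<Rightarrow> 'a \<Rightarrow> 'a \<Rightarrow> 'a \<Rightarrow> 'a option \<Rightarrow> 'a option" where
  "moebius a b c d z = (case p1_coords z of (x, y) \<Rightarrow> p1_point (a * x + b * y) (c * x + d * y))"

lemma p1_point_coords [simp]: "p1_point (fst (p1_coords z)) (snd (p1_coords z)) = z"
  by (cases z) (auto simp: p1_point_def p1_coords_def)

lemma p1_coords_nonzero: "p1_coords z \<noteq> (0, 0)"
  by (cases z) (auto simp: p1_coords_def)

lemma p1_point_smult: "\<mu> \<noteq> 0 \<Longrightarrow> p1_point (\<mu> * x) (\<mu> * y) = p1_point x y"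
  by (auto simp: p1_point_def)

lemma p1_scale_nonzero: "(x, y) \<noteq> (0, 0) \<Longrightarrow> p1_scale x y \<noteq> 0"
  by (auto simp: p1_scale_def)

lemma p1_coords_point:
  "(x, y) \<noteq> (0, 0) \<Longrightarrow> p1_coords (p1_point x y) = (x / p1_scale x y, y / p1_scale x y)"
  by (auto simp: p1_coords_def p1_point_def p1_scale_def)

lemma moebius_p1_point:
  assumes "(x, y) \<noteq> (0, 0)"
  shows "moebius a b c d (p1_point x y) = p1_point (a * x + b * y) (c * x + d * y)"
proof -
  define s where "s = p1_scale x y"
  have "s \<noteq> 0" using p1_scale_nonzero[OF assms] by (simp add: s_def)
  have "moebius a b c d (p1_point x y) =
      p1_point (a * (x / s) + b * (y / s)) (c * (x / s) + d * (y / s))"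
    using p1_coords_point[OF assms] by (simp add: moebius_def s_def)
  also have "\<dots> = p1_point (inverse s * (a * x + b * y)) (inverse s * (c * x + d * y))"
    by (simp add: divide_inverse algebra_simps)
  also have "\<dots> = p1_point (a * x + b * y) (c * x + d * y)"
    using \<open>s \<noteq> 0\<close> by (simp add: p1_point_smult)
  finally show ?thesis .
qed

lemma moebius_affine:
  assumes "c = 0" "d \<noteq> 0"
  shows "moebius a b c d = map_option (\<lambda>x. (a / d) * x + b / d)"
  using assms by (auto simp: fun_eq_iff moebius_def p1_coords_def p1_point_def add_divide_distrib
      split: option.split)

lemma moebius_decompose:
  assumes "c \<noteq> 0"
  shows "moebius a b c d = map_option (\<lambda>x. ((b * c - a * d) / c) * x + a / c)
      \<circ> moebius 0 1 1 0 \<circ> map_option (\<lambda>x. c * x + d)"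
proof
  fix z
  show "moebius a b c d z = (map_option (\<lambda>x. ((b * c - a * d) / c) * x + a / c)
      \<circ> moebius 0 1 1 0 \<circ> map_option (\<lambda>x. c * x + d)) z"
  proof (cases z)
    case (Some t)
    have "(a * t + b) / (c * t + d) = (b * c - a * d) / c / (c * t + d) + a / c"
      if "c * t + d \<noteq> 0"
      using that assms by (simp add: divide_simps) (simp add: algebra_simps)
    then show ?thesis
      using Some by (simp add: moebius_def p1_coords_def p1_point_def)
  qed (use assms in \<open>simp add: moebius_def p1_coords_def p1_point_def\<close>)
qed

lemma singular_2x2_iff:
  "(a::'a::field) * d = b * c \<longleftrightarrow> (\<exists>x y. (x, y) \<noteq> (0, 0) \<and> a * x + b * y = 0 \<and> c * x + d * y = 0)"
proof
  assume det: "a * d = b * c"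
  show "\<exists>x y. (x, y) \<noteq> (0, 0) \<and> a * x + b * y = 0 \<and> c * x + d * y = 0"
  proof (cases "(a, b) = (0, 0)")
    case False
    then show ?thesis using det by (intro exI[of _ b] exI[of _ "- a"]) (auto simp: algebra_simps)
  next
    case ab: True
    show ?thesis
    proof (cases "(d, c) = (0, 0)")
      case False
      then show ?thesis using ab by (intro exI[of _ d] exI[of _ "- c"]) (auto simp: algebra_simps)
    next
      case True
      then show ?thesis using ab by (intro exI[of _ 1] exI[of _ 0]) auto
    qed
  qed
next
  assume "\<exists>x y. (x, y) \<noteq> (0, 0) \<and> a * x + b * y = 0 \<and> c * x + d * y = 0"
  then obtain x y where xy: "(x, y) \<noteq> (0, 0)" "a * x + b * y = 0" "c * x + d * y = 0" by blast
  have "(a * d - b * c) * x = d * (a * x + b * y) - b * (c * x + d * y)"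
    "(a * d - b * c) * y = a * (c * x + d * y) - c * (a * x + b * y)"
    by (simp_all add: algebra_simps)
  then show "a * d = b * c" using xy by auto
qed

lemma evenperm_map_option:
  assumes "f permutes (UNIV :: 'a::finite set)"
  shows "map_option f permutes UNIV" "evenperm (map_option f) \<longleftrightarrow> evenperm f"
proof -
  have "y \<notin> range Some \<Longrightarrow> map_option f y = y" for y by (cases y) auto
  then have "map_option f permutes range Some" "evenperm (map_option f) \<longleftrightarrow> evenperm f"
    using evenperm_transport[OF finite_class.finite_UNIV inj_Some assms, of "map_option f"]
    by simp_all
  then show "map_option f permutes UNIV" "evenperm (map_option f) \<longleftrightarrow> evenperm f"
    using permutes_subset by blast+
qed

text \<open>The hypothesis \<open>4 dvd CARD('k)\<close> excludes \<open>\<bbbF>\<^sub>2\<close>, where the Moebius transformations act on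
  three points as the full symmetric group.\<close>
locale char2_field =
  fixes field_type :: "'k::{field,finite} itself"
  assumes two_eq_zero [simp]: "(2::'k) = 0" and four_dvd_card: "4 dvd CARD('k)"
begin

lemma add_self [simp]: "(x::'k) + x = 0"
  by (metis mult_2 mult_zero_left two_eq_zero)

lemma add_eq_0_iff_eq: "(x::'k) + y = 0 \<longleftrightarrow> x = y"
  by (metis add_self add_right_cancel)

text \<open>Squaring is additive, hence injective, hence bijective on the finite field.\<close>
lemma square_eq_iff: "(x::'k) * x = y * y \<longleftrightarrow> x = y"
proof
  assume "x * x = y * y"
  then have "(x + y) * (x + y) = 0" by (simp add: algebra_simps)
  then show "x = y" by (simp add: add_eq_0_iff_eq)
qed simp

lemma bij_square: "bij (\<lambda>x::'k. x * x)"
  using finite_UNIV_inj_surj[of "\<lambda>x::'k. x * x"] square_eq_iff by (auto intro!: injI simp: bij_def)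

definition square_root :: "'k \<Rightarrow> 'k" where
  "square_root a = (THE s. s * s = a)"

lemma square_root_unique: "s * s = a \<Longrightarrow> square_root a = s"
  unfolding square_root_def by (rule the_equality) (auto simp: square_eq_iff)

lemma square_root_square [simp]: "square_root a * square_root a = a"
  using bij_square by (metis (no_types) bij_pointE square_root_unique)

lemma affine_permutes: "(a::'k) \<noteq> 0 \<Longrightarrow> (\<lambda>x. a * x + b) permutes UNIV"
  by (rule bij_imp_permutes) (auto intro!: o_bij[of "\<lambda>x. (x - b) / a"] simp: fun_eq_iff)

lemma even_card: "even CARD('k)"
  using four_dvd_card by (auto simp: dvd_def)

lemma card_div_2_even: "even (CARD('k) div 2)"
  using four_dvd_card by (auto simp: dvd_def)

lemma evenperm_translation: "evenperm (\<lambda>x::'k. x + b)"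
proof (cases "b = 0")
  case False
  have inv: "(x + b) + b = x" for x :: 'k by (simp add: add.assoc)
  have perm: "(\<lambda>x::'k. x + b) permutes UNIV"
    by (rule permutes_involution) (simp_all add: inv)
  have "{x::'k. x + b \<noteq> x} = UNIV" using False by auto
  then show ?thesis
    using evenperm_involution(2)[OF finite_class.finite_UNIV perm inv] card_div_2_even by simp
qed simp

lemma evenperm_scaling:
  assumes "a \<noteq> (0::'k)"
  shows "evenperm (\<lambda>x. a * x)"
proof -
  obtain s where s: "s * s = a" using square_root_square by blast
  have "(\<lambda>x::'k. s * x) permutes UNIV"
    using affine_permutes[of s 0] s assms by auto
  then have "evenperm ((\<lambda>x. s * x) \<circ> (\<lambda>x. s * x))"
    using evenperm_comp permutes_imp_permutation[OF finite_class.finite_UNIV] by blast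
  moreover have "(\<lambda>x. s * x) \<circ> (\<lambda>x. s * x) = (\<lambda>x. a * x)"
    using s by (auto simp: mult.assoc)
  ultimately show ?thesis by simp
qed

lemma evenperm_affine:
  assumes "(a::'k) \<noteq> 0"
  shows "evenperm (\<lambda>x. a * x + b)"
proof -
  have "(\<lambda>x. a * x) permutes UNIV" "(\<lambda>x. x + b) permutes UNIV"
    using affine_permutes[OF assms, of 0] affine_permutes[of 1 b] by simp_all
  then have "evenperm ((\<lambda>x. x + b) \<circ> (\<lambda>x. a * x))"
    using evenperm_comp permutes_imp_permutation[OF finite_class.finite_UNIV]
      evenperm_translation evenperm_scaling[OF assms] by blast
  moreover have "(\<lambda>x. x + b) \<circ> (\<lambda>x. a * x) = (\<lambda>x. a * x + b)" by auto
  ultimately show ?thesis by simp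
qed

text \<open>The inversion fixes only \<open>1\<close>, because \<open>1\<close> is the only square root of \<open>1\<close>.\<close>
lemma evenperm_inversion: "moebius (0::'k) 1 1 0 permutes UNIV" "evenperm (moebius (0::'k) 1 1 0)"
proof -
  have inv: "moebius 0 1 1 0 (moebius 0 1 1 0 z) = (z :: 'k option)" for z
    by (cases z) (simp_all add: moebius_def p1_coords_def p1_point_def)
  show perm: "moebius 0 1 1 0 permutes (UNIV :: 'k option set)"
    by (rule permutes_involution[OF inv]) simp
  have "moebius 0 1 1 0 z = z \<longleftrightarrow> z = Some (1::'k)" for z
  proof (cases z)
    case (Some t)
    have "t = 1" if "t \<noteq> 0" "1 / t = t"
      using that square_eq_iff[of t 1] by (simp add: field_simps)
    then show ?thesis using Some by (auto simp: moebius_def p1_coords_def p1_point_def)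
  qed (simp add: moebius_def p1_coords_def p1_point_def)
  then have "{z. moebius 0 1 1 0 z \<noteq> z} = UNIV - {Some (1::'k)}" by auto
  moreover have "card (UNIV - {Some (1::'k)}) = CARD('k)"
    by (simp add: card_Diff_subset card_UNIV_option)
  ultimately show "evenperm (moebius (0::'k) 1 1 0)"
    using evenperm_involution(2)[OF finite_class.finite_UNIV perm inv] card_div_2_even by simp
qed

lemma moebius_even:
  assumes "a * d \<noteq> b * (c::'k)"
  shows "moebius a b c d permutes UNIV" "evenperm (moebius a b c d)"
proof -
  have "moebius a b c d permutes UNIV \<and> evenperm (moebius a b c d)"
  proof (cases "c = 0")
    case True
    then have "a / d \<noteq> 0" "d \<noteq> 0" using assms by auto
    then show ?thesis
      using evenperm_map_option[OF affine_permutes[OF \<open>a / d \<noteq> 0\<close>]]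
        evenperm_affine[OF \<open>a / d \<noteq> 0\<close>]
      by (simp add: moebius_affine[OF True])
  next
    case False
    define e where "e = (b * c - a * d) / c"
    have "e \<noteq> 0" using assms False by (auto simp: e_def add_eq_0_iff_eq)
    then have outer: "map_option (\<lambda>x. e * x + a / c) permutes UNIV"
        "evenperm (map_option (\<lambda>x. e * x + a / c))"
      and inner: "map_option (\<lambda>x. c * x + d) permutes UNIV"
        "evenperm (map_option (\<lambda>x. c * x + d))"
      using evenperm_map_option[OF affine_permutes[OF \<open>e \<noteq> 0\<close>]]
        evenperm_map_option[OF affine_permutes[OF False]]
        evenperm_affine[OF \<open>e \<noteq> 0\<close>] evenperm_affine[OF False] by simp_all
    have perm: "map_option (\<lambda>x. e * x + a / c) \<circ> moebius 0 1 1 0 \<circ> map_option (\<lambda>x. c * x + d)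
        permutes UNIV"
      by (intro permutes_compose outer inner evenperm_inversion)
    show ?thesis
      unfolding moebius_decompose[OF False] e_def[symmetric]
      using perm outer inner evenperm_inversion
      by (simp add: evenperm_comp permutes_imp_permutation[OF finite_class.finite_UNIV]
          permutes_compose)
  qed
  then show "moebius a b c d permutes UNIV" "evenperm (moebius a b c d)" by simp_all
qed

end

abbreviation proj_map :: "'k::field^3^3 \<Rightarrow> ('k^3) set \<Rightarrow> ('k^3) set" where
  "proj_map M P \<equiv> (\<lambda>v. M *v v) ` P"

lemma proj_point_smult:
  assumes "(c::'k::field) \<noteq> 0"
  shows "proj_point (c *s v) = proj_point v"
  unfolding proj_point_def
proof (intro set_eqI iffI)
  fix w assume "w \<in> {d *s (c *s v) |d. d \<noteq> 0}"
  then show "w \<in> {d *s v |d. d \<noteq> 0}" using assms by (auto simp: vector_smult_assoc)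
next
  fix w assume "w \<in> {d *s v |d. d \<noteq> 0}"
  then obtain d where "d \<noteq> 0" "w = d *s v" by blast
  then have "w = (d / c) *s (c *s v)" "d / c \<noteq> 0" using assms by (simp_all add: vector_smult_assoc)
  then show "w \<in> {d *s (c *s v) |d. d \<noteq> 0}" by blast
qed

lemma proj_point_eq_iff:
  "proj_point (v::'k::field^3) = proj_point w \<longleftrightarrow> (\<exists>c. c \<noteq> 0 \<and> w = c *s v)"
proof
  assume "proj_point v = proj_point w"
  moreover have "w \<in> proj_point w" unfolding proj_point_def by (auto intro: exI[of _ 1])
  ultimately show "\<exists>c. c \<noteq> 0 \<and> w = c *s v" unfolding proj_point_def by auto
qed (use proj_point_smult in metis)

lemma proj_map_proj_point: "proj_map M (proj_point v) = proj_point (M *v v)"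
  unfolding proj_point_def by (force simp: vector_scalar_commute)

lemma proj_map_mult: "proj_map N (proj_map M P) = proj_map (N ** M) P"
  by (simp add: image_image matrix_vector_mul_assoc)

lemma quadratic_form_smult:
  assumes "is_quadratic_form Q"
  shows "Q (c *s v) = c * c * Q (v::'k::field^3)"
proof -
  obtain A where A: "\<And>v. Q v = (\<Sum>i\<in>UNIV. \<Sum>j\<in>UNIV. A$i$j * v$i * v$j)"
    using assms unfolding is_quadratic_form_def by blast
  show ?thesis by (simp add: A sum_distrib_left mult_ac)
qed

lemma proj_point_in_conic_points_iff:
  assumes "is_quadratic_form Q"
  shows "proj_point v \<in> conic_points Q \<longleftrightarrow> v \<noteq> 0 \<and> Q (v::'k::field^3) = 0"
proof
  assume "proj_point v \<in> conic_points Q"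
  then obtain w where w: "proj_point w = proj_point v" "w \<noteq> 0" "Q w = 0"
    unfolding conic_points_def by auto
  then obtain c where "c \<noteq> 0" "v = c *s w" unfolding proj_point_eq_iff by blast
  then show "v \<noteq> 0 \<and> Q v = 0" using w(2,3) quadratic_form_smult[OF assms] by simp
qed (auto simp: conic_points_def)

lemma conic_pointsE:
  assumes "P \<in> conic_points Q"
  obtains v where "P = proj_point v" "v \<noteq> 0" "Q v = 0"
  using assms unfolding conic_points_def by auto

lemma conic_iso_nonzero: "conic_iso Q Q' M \<Longrightarrow> v \<noteq> 0 \<Longrightarrow> M *v v \<noteq> 0"
  unfolding conic_iso_def using inj_matrix_vector_mult by (metis injD matrix_vector_mult_0_right)

lemma conic_iso_zero: "conic_iso Q Q' M \<Longrightarrow> Q v = 0 \<Longrightarrow> Q' (M *v v) = 0"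
  unfolding conic_iso_def by auto

lemma conic_iso_proj_map:
  assumes "is_quadratic_form Q'" "conic_iso Q Q' M" "P \<in> conic_points Q"
  shows "proj_map M P \<in> conic_points Q'"
proof -
  obtain v where v: "P = proj_point v" "v \<noteq> 0" "Q v = 0" using assms(3) by (rule conic_pointsE)
  then show ?thesis
    using conic_iso_nonzero[OF assms(2) v(2)] conic_iso_zero[OF assms(2) v(3)]
      proj_point_in_conic_points_iff[OF assms(1)] by (simp add: proj_map_proj_point)
qed

lemma conic_iso_inverse:
  assumes "conic_iso Q Q' (M::'k::field^3^3)"
  obtains M' where "conic_iso Q' Q M'" "M' ** M = mat 1" "M ** M' = mat 1"
proof -
  obtain c where c: "invertible M" "c \<noteq> 0" "\<And>v. Q' (M *v v) = c * Q v"
    using assms unfolding conic_iso_def by blast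
  obtain M' where M': "M ** M' = mat 1" "M' ** M = mat 1"
    using c(1) unfolding invertible_def by blast
  have "Q (M' *v v) = inverse c * Q' v" for v
    using c(2) c(3)[of "M' *v v"] by (simp add: matrix_vector_mul_assoc M'(1))
  then have "conic_iso Q' Q M'"
    unfolding conic_iso_def invertible_def using M' c(2) by (metis inverse_nonzero_iff_nonzero)
  then show ?thesis using that M' by blast
qed

lemma conic_iso_mult:
  assumes "conic_iso Q1 Q2 (M::'k::field^3^3)" "conic_iso Q2 Q3 N"
  shows "conic_iso Q1 Q3 (N ** M)"
proof -
  obtain c d where "invertible M" "c \<noteq> 0" "\<And>v. Q2 (M *v v) = c * Q1 v"
    "invertible N" "d \<noteq> 0" "\<And>v. Q3 (N *v v) = d * Q2 v"
    using assms unfolding conic_iso_def by blast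
  then show ?thesis
    unfolding conic_iso_def
    by (intro conjI invertible_mult exI[of _ "d * c"])
      (auto simp: matrix_vector_mul_assoc[symmetric])
qed

lemma conic_iso_mat_1: "conic_iso Q Q (mat 1 :: 'k::field^3^3)"
  unfolding conic_iso_def invertible_def by (auto intro: exI[of _ 1] exI[of _ "mat 1"])

section \<open>Quadratic forms in characteristic 2\<close>

definition linform :: "'k::field^3 \<Rightarrow> 'k^3 \<Rightarrow> 'k" where
  "linform l v = l$1 * v$1 + l$2 * v$2 + l$3 * v$3"

lemma linform_add [simp]: "linform l (v + w) = linform l v + linform l w"
  and linform_smult [simp]: "linform l (c *s v) = c * linform l v"
  and linform_zero [simp]: "linform l 0 = 0"
  by (simp_all add: linform_def algebra_simps)

definition quad_form :: "'k::field \<Rightarrow> 'k \<Rightarrow> 'k \<Rightarrow> 'k \<Rightarrow> 'k \<Rightarrow> 'k \<Rightarrow> 'k^3 \<Rightarrow> 'k" where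
  "quad_form a11 a22 a33 a12 a13 a23 v = a11 * v$1 * v$1 + a22 * v$2 * v$2 + a33 * v$3 * v$3
      + a12 * v$1 * v$2 + a13 * v$1 * v$3 + a23 * v$2 * v$3"

lemma quadratic_form_eq_quad_form:
  assumes "is_quadratic_form (Q::'k::field^3 \<Rightarrow> 'k)"
  obtains a11 a22 a33 a12 a13 a23 where "Q = quad_form a11 a22 a33 a12 a13 a23"
proof -
  obtain A where A: "\<And>v. Q v = (\<Sum>i\<in>UNIV. \<Sum>j\<in>UNIV. A$i$j * v$i * v$j)"
    using assms unfolding is_quadratic_form_def by blast
  have "Q = quad_form (A$1$1) (A$2$2) (A$3$3) (A$1$2 + A$2$1) (A$1$3 + A$3$1) (A$2$3 + A$3$2)"
    by (auto simp: fun_eq_iff A quad_form_def sum_3 algebra_simps)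
  then show ?thesis by (rule that)
qed

lemma quad_form_smult:
  "quad_form a11 a22 a33 a12 a13 a23 (c *s v) = c * c * quad_form a11 a22 a33 a12 a13 a23 v"
  by (simp add: quad_form_def algebra_simps)

definition polar :: "('k::field^3 \<Rightarrow> 'k) \<Rightarrow> 'k^3 \<Rightarrow> 'k^3 \<Rightarrow> 'k" where
  "polar Q u v = Q (u + v) - Q u - Q v"

lemma conic_iso_radical:
  assumes "conic_iso Q Q M" "\<And>v. polar Q r v = 0"
  shows "polar Q (M *v r) v = 0"
proof -
  obtain \<kappa> where \<kappa>: "\<And>v. Q (M *v v) = \<kappa> * Q v" using assms(1) unfolding conic_iso_def by blast
  have "invertible M" using assms(1) by (simp add: conic_iso_def)
  then obtain M' where M': "M ** M' = mat 1" unfolding invertible_def by blast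
  have "polar Q (M *v r) (M *v (M' *v v)) = \<kappa> * polar Q r (M' *v v)"
    by (simp add: polar_def \<kappa> matrix_vector_right_distrib[symmetric] right_diff_distrib)
  then show ?thesis using M' assms(2) by (simp add: matrix_vector_mul_assoc)
qed

text \<open>In characteristic 2 the polar form of \<open>quad_form a11 a22 a33 a12 a13 a23\<close> is alternating, with
  Gram matrix \<open>[[0, a12, a13], [a12, 0, a23], [a13, a23, 0]]\<close>. The nucleus spans its kernel when
  it is nonzero, and it is zero exactly when the form is the square of a linear form.\<close>
definition nucleus :: "'k::field \<Rightarrow> 'k \<Rightarrow> 'k \<Rightarrow> 'k^3" where
  "nucleus a12 a13 a23 = vector [a23, a13, a12]"

context char2_field
begin

lemma polar_quad_form:
  "polar (quad_form a11 a22 a33 a12 a13 a23) u (v::'k^3) =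
     a12 * (u$1 * v$2 + u$2 * v$1) + a13 * (u$1 * v$3 + u$3 * v$1) + a23 * (u$2 * v$3 + u$3 * v$2)"
proof -
  have "quad_form a11 a22 a33 a12 a13 a23 (u + v) = quad_form a11 a22 a33 a12 a13 a23 u
      + quad_form a11 a22 a33 a12 a13 a23 v
      + (a12 * (u$1 * v$2 + u$2 * v$1) + a13 * (u$1 * v$3 + u$3 * v$1)
        + a23 * (u$2 * v$3 + u$3 * v$2))
      + 2 * (a11 * u$1 * v$1 + a22 * u$2 * v$2 + a33 * u$3 * v$3)"
    unfolding quad_form_def by (simp add: algebra_simps)
  then show ?thesis unfolding polar_def by (simp add: algebra_simps)
qed

lemma polar_add_left:
  "polar (quad_form a11 a22 a33 a12 a13 a23) (u + u') (v::'k^3) =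
   polar (quad_form a11 a22 a33 a12 a13 a23) u v + polar (quad_form a11 a22 a33 a12 a13 a23) u' v"
  and polar_smult_left:
  "polar (quad_form a11 a22 a33 a12 a13 a23) (c *s u) v =
   c * polar (quad_form a11 a22 a33 a12 a13 a23) u v"
  and polar_commute:
  "polar (quad_form a11 a22 a33 a12 a13 a23) u v = polar (quad_form a11 a22 a33 a12 a13 a23) v u"
  unfolding polar_quad_form by (simp_all add: algebra_simps)

lemma polar_nucleus: "polar (quad_form a11 a22 a33 a12 a13 a23) (nucleus a12 a13 a23) (v::'k^3) = 0"
proof -
  have "polar (quad_form a11 a22 a33 a12 a13 a23) (nucleus a12 a13 a23) v =
    2 * (a12 * a23 * v$2 + a12 * a13 * v$1 + a13 * a23 * v$3)"
    unfolding polar_quad_form nucleus_def by (simp add: algebra_simps)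
  then show ?thesis by simp
qed

lemma polar_radical_nucleus:
  assumes "nucleus a12 a13 a23 \<noteq> (0::'k^3)"
    and "\<And>v. polar (quad_form a11 a22 a33 a12 a13 a23) w v = 0"
  obtains t where "w = t *s nucleus a12 a13 a23"
proof -
  have e1: "a12 * w$2 + a13 * w$3 = 0" and e2: "a12 * w$1 + a23 * w$3 = 0"
    and e3: "a13 * w$1 + a23 * w$2 = 0"
    using assms(2)[of "axis 1 1"] assms(2)[of "axis 2 1"] assms(2)[of "axis 3 1"]
    by (simp_all add: polar_quad_form axis_def)
  consider "a12 \<noteq> 0" | "a12 = 0" "a13 \<noteq> 0" | "a12 = 0" "a13 = 0" "a23 \<noteq> 0"
    using assms(1) by (auto simp: nucleus_def vec_eq_iff forall_3)
  then show ?thesis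
  proof cases
    case 1
    then show ?thesis using e1 e2
      by (intro that[of "w$3 / a12"])
        (auto simp: nucleus_def vec_eq_iff forall_3 add_eq_0_iff_eq field_simps)
  next
    case 2
    then show ?thesis using e1 e3
      by (intro that[of "w$2 / a13"])
        (auto simp: nucleus_def vec_eq_iff forall_3 add_eq_0_iff_eq field_simps)
  next
    case 3
    then show ?thesis using e2 e3
      by (intro that[of "w$1 / a23"])
        (auto simp: nucleus_def vec_eq_iff forall_3 add_eq_0_iff_eq field_simps)
  qed
qed

lemma quad_form_square:
  assumes "Q = quad_form a11 a22 a33 a12 a13 a23" "nucleus a12 a13 a23 = (0::'k^3)"
  obtains l where "\<And>v. Q v = linform l v * linform l v"
proof -
  have "a12 = 0" "a13 = 0" "a23 = 0" using assms(2) by (auto simp: nucleus_def vec_eq_iff forall_3)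
  define l :: "'k^3" where "l = vector [square_root a11, square_root a22, square_root a33]"
  have sum_sq: "(x + y + z) * (x + y + z) = x * x + y * y + z * z" for x y z :: 'k
    by (simp add: algebra_simps)
  have sq: "(square_root a * x) * (square_root a * x) = a * x * x" for a x :: 'k
    using square_root_square[of a] by (metis mult.assoc mult.left_commute)
  have "Q v = linform l v * linform l v" for v
    unfolding assms(1) linform_def l_def vector_3 sum_sq sq quad_form_def
    using \<open>a12 = 0\<close> \<open>a13 = 0\<close> \<open>a23 = 0\<close> by simp
  then show ?thesis by (rule that)
qed

lemma nucleus_eigenvector:
  assumes "Q = quad_form a11 a22 a33 a12 a13 a23" "conic_iso Q Q M"
    and "nucleus a12 a13 a23 \<noteq> (0::'k^3)"
  obtains \<mu> where "M *v nucleus a12 a13 a23 = \<mu> *s nucleus a12 a13 a23"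
  using polar_radical_nucleus[OF assms(3)] conic_iso_radical[OF assms(2)] polar_nucleus
  unfolding assms(1) by blast

end

locale dual_frame =
  fixes u1 u2 u3 l1 l2 l3 :: "'k::field^3"
  assumes decompose: "\<And>v. v = linform l1 v *s u1 + linform l2 v *s u2 + linform l3 v *s u3"
    and dual: "linform l1 u1 = 1" "linform l1 u2 = 0" "linform l1 u3 = 0"
      "linform l2 u1 = 0" "linform l2 u2 = 1" "linform l2 u3 = 0"
      "linform l3 u1 = 0" "linform l3 u2 = 0" "linform l3 u3 = 1"
begin

definition comb :: "'k \<Rightarrow> 'k \<Rightarrow> 'k \<Rightarrow> 'k^3" where
  "comb x y z = x *s u1 + y *s u2 + z *s u3"

lemma linform_comb [simp]:
  "linform l1 (comb x y z) = x" "linform l2 (comb x y z) = y" "linform l3 (comb x y z) = z"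
  by (simp_all add: comb_def dual)

lemma comb_linform: "comb (linform l1 v) (linform l2 v) (linform l3 v) = v"
  using decompose[of v] by (simp add: comb_def)

lemma comb_eq_iff: "comb x y z = comb x' y' z' \<longleftrightarrow> x = x' \<and> y = y' \<and> z = z'"
  by (metis linform_comb)

lemma comb_eq_0_iff: "comb x y z = 0 \<longleftrightarrow> x = 0 \<and> y = 0 \<and> z = 0"
  using comb_eq_iff[of x y z 0 0 0] by (simp add: comb_def)

lemma smult_comb: "c *s comb x y z = comb (c * x) (c * y) (c * z)"
  by (simp add: comb_def vector_add_ldistrib vector_smult_assoc)

lemma linform_matrix_comb:
  "linform l (M *v comb x y z) =
    x * linform l (M *v u1) + y * linform l (M *v u2) + z * linform l (M *v u3)"
  by (simp add: comb_def matrix_vector_right_distrib vector_scalar_commute)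

end

lemma dual_frame_through:
  assumes "(r::'k::field^3) \<noteq> 0"
  obtains u1 u2 l1 l2 l3 where "dual_frame u1 u2 r l1 l2 l3"
proof -
  consider "r$3 \<noteq> 0" | "r$3 = 0" "r$2 \<noteq> 0" | "r$3 = 0" "r$2 = 0" "r$1 \<noteq> 0"
    using assms by (auto simp: vec_eq_iff forall_3)
  then show ?thesis
  proof cases
    case 1
    have "dual_frame (axis 1 1) (axis 2 1) r
      (vector [1, 0, - r$1 / r$3]) (vector [0, 1, - r$2 / r$3]) (vector [0, 0, 1 / r$3])"
      using 1 by unfold_locales (auto simp: linform_def vec_eq_iff forall_3 axis_def field_simps)
    then show ?thesis by (rule that)
  next
    case 2
    have "dual_frame (axis 1 1) (axis 3 1) r
      (vector [1, - r$1 / r$2, 0]) (vector [0, - r$3 / r$2, 1]) (vector [0, 1 / r$2, 0])"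
      using 2 by unfold_locales (auto simp: linform_def vec_eq_iff forall_3 axis_def field_simps)
    then show ?thesis by (rule that)
  next
    case 3
    have "dual_frame (axis 2 1) (axis 3 1) r
      (vector [- r$2 / r$1, 1, 0]) (vector [- r$3 / r$1, 0, 1]) (vector [1 / r$1, 0, 0])"
      using 3 by unfold_locales (auto simp: linform_def vec_eq_iff forall_3 axis_def field_simps)
    then show ?thesis by (rule that)
  qed
qed

lemma dual_frame_annihilating:
  assumes "(s::'k::field^3) \<noteq> 0"
  obtains u1 u2 u3 l1 l2 where "dual_frame u1 u2 u3 l1 l2 s"
proof -
  consider "s$3 \<noteq> 0" | "s$3 = 0" "s$2 \<noteq> 0" | "s$3 = 0" "s$2 = 0" "s$1 \<noteq> 0"
    using assms by (auto simp: vec_eq_iff forall_3)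
  then show ?thesis
  proof cases
    case 1
    have "dual_frame
      (vector [1, 0, - s$1 / s$3]) (vector [0, 1, - s$2 / s$3]) (vector [0, 0, 1 / s$3])
      (axis 1 1) (axis 2 1) s"
      using 1 by unfold_locales (auto simp: linform_def vec_eq_iff forall_3 axis_def field_simps)
    then show ?thesis by (rule that)
  next
    case 2
    have "dual_frame
      (vector [1, - s$1 / s$2, 0]) (vector [0, - s$3 / s$2, 1]) (vector [0, 1 / s$2, 0])
      (axis 1 1) (axis 3 1) s"
      using 2 by unfold_locales (auto simp: linform_def vec_eq_iff forall_3 axis_def field_simps)
    then show ?thesis by (rule that)
  next
    case 3
    have "dual_frame
      (vector [- s$2 / s$1, 1, 0]) (vector [- s$3 / s$1, 0, 1]) (vector [1 / s$1, 0, 0])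
      (axis 2 1) (axis 3 1) s"
      using 3 by unfold_locales (auto simp: linform_def vec_eq_iff forall_3 axis_def field_simps)
    then show ?thesis by (rule that)
  qed
qed

section \<open>Automorphisms of conics induce even permutations\<close>

locale char2_frame = char2_field field_type + dual_frame u1 u2 u3 l1 l2 l3
  for field_type :: "'k::{field,finite} itself" and u1 u2 u3 l1 l2 l3 :: "'k^3"

text \<open>A conic with equation \<open>q(x, y) + \<gamma> z\<^sup>2 = 0\<close>, \<open>\<gamma> \<noteq> 0\<close>, in the frame (a smooth conic with
  nucleus \<open>u3\<close>, or a double line) is the graph of \<open>z = \<surd>(q(x, y) / \<gamma>)\<close> over the projective
  line of coordinates \<open>(x : y)\<close>, square roots being unique in characteristic 2. If \<open>M\<close> acts
  linearly on these coordinates, it acts on the conic as a Moebius transformation.\<close>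
locale graph_conic = char2_frame field_type u1 u2 u3 l1 l2 l3
  for field_type :: "'k::{field,finite} itself" and u1 u2 u3 l1 l2 l3 :: "'k^3" +
  fixes Q :: "'k^3 \<Rightarrow> 'k" and M :: "'k^3^3" and \<alpha> \<beta> \<delta> \<gamma> a b c d :: 'k
  assumes Q_frame: "\<And>x y z. Q (x *s u1 + y *s u2 + z *s u3) =
      \<alpha> * x * x + \<beta> * y * y + \<delta> * x * y + \<gamma> * z * z"
    and gamma_nonzero: "\<gamma> \<noteq> 0" and iso: "conic_iso Q Q M"
    and linform1_M: "\<And>v. Q v = 0 \<Longrightarrow> linform l1 (M *v v) = a * linform l1 v + b * linform l2 v"
    and linform2_M: "\<And>v. Q v = 0 \<Longrightarrow> linform l2 (M *v v) = c * linform l1 v + d * linform l2 v"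
begin

lemma Q_comb: "Q (comb x y z) = \<alpha> * x * x + \<beta> * y * y + \<delta> * x * y + \<gamma> * z * z"
  by (simp add: comb_def Q_frame)

definition height :: "'k \<Rightarrow> 'k \<Rightarrow> 'k" where
  "height x y = square_root ((\<alpha> * x * x + \<beta> * y * y + \<delta> * x * y) / \<gamma>)"

definition lift_point :: "'k option \<Rightarrow> 'k^3" where
  "lift_point z = comb (fst (p1_coords z)) (snd (p1_coords z))
    (height (fst (p1_coords z)) (snd (p1_coords z)))"

definition chart :: "'k option \<Rightarrow> ('k^3) set" where
  "chart z = proj_point (lift_point z)"

lemma Q_comb_eq_0_iff: "Q (comb x y z) = 0 \<longleftrightarrow> z = height x y"
proof -
  have "Q (comb x y z) = 0 \<longleftrightarrow> \<alpha> * x * x + \<beta> * y * y + \<delta> * x * y = \<gamma> * z * z"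
    unfolding Q_comb add_eq_0_iff_eq ..
  also have "\<dots> \<longleftrightarrow> z * z = (\<alpha> * x * x + \<beta> * y * y + \<delta> * x * y) / \<gamma>"
    using gamma_nonzero by (auto simp: field_simps)
  also have "\<dots> \<longleftrightarrow> z = height x y"
    unfolding height_def using square_root_unique by (metis square_root_square)
  finally show ?thesis .
qed

lemma height_smult: "height (s * x) (s * y) = s * height x y"
  unfolding height_def by (rule square_root_unique) (simp add: field_simps)

lemma lift_point_on_conic: "lift_point z \<noteq> 0" "Q (lift_point z) = 0"
  using p1_coords_nonzero[of z]
  by (auto simp: lift_point_def comb_eq_0_iff Q_comb_eq_0_iff prod_eq_iff)

lemma proj_point_eq_chart:
  assumes "Q v = 0" "v \<noteq> 0"
  shows "(linform l1 v, linform l2 v) \<noteq> (0, 0)"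
    "proj_point v = chart (p1_point (linform l1 v) (linform l2 v))"
proof -
  define x y where "x = linform l1 v" and "y = linform l2 v"
  have v: "v = comb x y (height x y)"
    using assms(1) comb_linform[of v] Q_comb_eq_0_iff by (metis x_def y_def)
  have "height 0 0 = 0" unfolding height_def by (rule square_root_unique) simp
  then show xy: "(linform l1 v, linform l2 v) \<noteq> (0, 0)"
    using v assms(2) by (auto simp: comb_def x_def y_def)
  define s where "s = p1_scale x y"
  have "(x, y) \<noteq> (0, 0)" using xy by (simp add: x_def y_def)
  then have "s \<noteq> 0" "p1_coords (p1_point x y) = (x / s, y / s)"
    using p1_scale_nonzero p1_coords_point by (simp_all add: s_def)
  then have "v = s *s lift_point (p1_point x y)"
    using height_smult[of s "x / s" "y / s"] v by (simp add: lift_point_def smult_comb)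
  then have "proj_point v = chart (p1_point x y)"
    using \<open>s \<noteq> 0\<close> by (simp add: chart_def proj_point_smult)
  then show "proj_point v = chart (p1_point (linform l1 v) (linform l2 v))"
    by (simp add: x_def y_def)
qed

lemma conic_points_eq_range_chart: "conic_points Q = range chart"
proof
  show "conic_points Q \<subseteq> range chart"
    using proj_point_eq_chart by (auto elim!: conic_pointsE)
  show "range chart \<subseteq> conic_points Q"
    using lift_point_on_conic by (auto simp: conic_points_def chart_def)
qed

lemma inj_chart: "inj chart"
proof (rule injI)
  fix z z' assume "chart z = chart z'"
  then obtain c where "c \<noteq> 0" "lift_point z' = c *s lift_point z"
    unfolding chart_def proj_point_eq_iff by blast
  then have "p1_coords z' = (c * fst (p1_coords z), c * snd (p1_coords z))"
    by (simp add: lift_point_def smult_comb comb_eq_iff prod_eq_iff)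
  then show "z = z'"
    using \<open>c \<noteq> 0\<close> p1_point_coords[of z'] by (simp add: p1_point_smult)
qed

lemma M_lift_point: "Q (M *v lift_point z) = 0" "M *v lift_point z \<noteq> 0"
  using conic_iso_zero[OF iso lift_point_on_conic(2)]
    conic_iso_nonzero[OF iso lift_point_on_conic(1)] by simp_all

lemma linform_M_lift_point:
  assumes "p1_coords z = (x, y)"
  shows "linform l1 (M *v lift_point z) = a * x + b * y"
    "linform l2 (M *v lift_point z) = c * x + d * y"
proof -
  have "linform l1 (lift_point z) = x" "linform l2 (lift_point z) = y"
    using assms by (simp_all add: lift_point_def)
  then show "linform l1 (M *v lift_point z) = a * x + b * y"
    "linform l2 (M *v lift_point z) = c * x + d * y"
    using linform1_M[OF lift_point_on_conic(2)] linform2_M[OF lift_point_on_conic(2)] by simp_all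
qed

text \<open>A kernel vector of the matrix would give a point of the conic mapped to the vertex
  \<open>u3\<close> of the coordinate projection, which does not lie on the conic.\<close>
lemma det_nonzero: "a * d \<noteq> b * c"
proof
  assume "a * d = b * c"
  then obtain x y where xy: "(x, y) \<noteq> (0, 0)" "a * x + b * y = 0" "c * x + d * y = 0"
    unfolding singular_2x2_iff by blast
  define s where "s = p1_scale x y"
  have "linform l1 (M *v lift_point (p1_point x y)) = (a * x + b * y) / s"
    "linform l2 (M *v lift_point (p1_point x y)) = (c * x + d * y) / s"
    using linform_M_lift_point[OF p1_coords_point[OF xy(1)]]
    by (simp_all add: s_def add_divide_distrib)
  then show False using proj_point_eq_chart(1)[OF M_lift_point] xy(2,3) by simp
qed

lemma chart_equivariant:
  "restrict_id (proj_map M) (conic_points Q) (chart z) = chart (moebius a b c d z)"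
proof -
  obtain x y where xy: "p1_coords z = (x, y)" by force
  then have "(x, y) \<noteq> (0, 0)" "p1_point x y = z"
    using p1_coords_nonzero[of z] p1_point_coords[of z] by simp_all
  have "restrict_id (proj_map M) (conic_points Q) (chart z) = proj_point (M *v lift_point z)"
    using conic_points_eq_range_chart by (simp add: chart_def proj_map_proj_point)
  also have "\<dots> = chart (p1_point (a * x + b * y) (c * x + d * y))"
    using proj_point_eq_chart(2)[OF M_lift_point] linform_M_lift_point[OF xy] by simp
  also have "\<dots> = chart (moebius a b c d z)"
    using moebius_p1_point[OF \<open>(x, y) \<noteq> (0, 0)\<close>] \<open>p1_point x y = z\<close> by simp
  finally show ?thesis .
qed

theorem card_conic_points: "card (conic_points Q) = CARD('k) + 1"
  using conic_points_eq_range_chart card_image[OF inj_chart] by (simp add: card_UNIV_option)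

theorem evenperm_conic_perm: "evenperm (restrict_id (proj_map M) (conic_points Q))"
  using evenperm_transport(2)[OF finite_class.finite_UNIV _ moebius_even(1)[OF det_nonzero],
      of chart]
    inj_chart chart_equivariant conic_points_eq_range_chart moebius_even(2)[OF det_nonzero] by simp

end

text \<open>A conic whose equation in the frame does not involve \<open>z\<close> is a pair of lines through the
  vertex \<open>u3\<close> (or just the vertex). Off the vertex its points are fibred, with affine lines as
  fibres, over the zeros of the binary form on the projective line; \<open>M\<close> permutes the zeros by a
  Moebius transformation and maps fibres to fibres affinely.\<close>
locale line_pair_conic = char2_frame field_type u1 u2 u3 l1 l2 l3
  for field_type :: "'k::{field,finite} itself" and u1 u2 u3 l1 l2 l3 :: "'k^3" +
  fixes Q :: "'k^3 \<Rightarrow> 'k" and M :: "'k^3^3" and \<alpha> \<beta> \<delta> \<mu> :: 'k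
  assumes Q_frame: "\<And>x y z. Q (x *s u1 + y *s u2 + z *s u3) = \<alpha> * x * x + \<beta> * y * y + \<delta> * x * y"
    and iso: "conic_iso Q Q M" and eigen: "M *v u3 = \<mu> *s u3"
begin

definition binary_form :: "'k \<Rightarrow> 'k \<Rightarrow> 'k" where
  "binary_form x y = \<alpha> * x * x + \<beta> * y * y + \<delta> * x * y"

definition zeros :: "'k option set" where
  "zeros = {z. binary_form (fst (p1_coords z)) (snd (p1_coords z)) = 0}"

definition lift_point :: "'k option \<times> 'k \<Rightarrow> 'k^3" where
  "lift_point zt = comb (fst (p1_coords (fst zt))) (snd (p1_coords (fst zt))) (snd zt)"

definition chart :: "'k option \<times> 'k \<Rightarrow> ('k^3) set" where
  "chart zt = proj_point (lift_point zt)"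

definition entry :: "'k^3 \<Rightarrow> 'k^3 \<Rightarrow> 'k" where
  "entry l u = linform l (M *v u)"

abbreviation base_map :: "'k option \<Rightarrow> 'k option" where
  "base_map \<equiv> moebius (entry l1 u1) (entry l1 u2) (entry l2 u1) (entry l2 u2)"

definition image_coords :: "'k option \<Rightarrow> 'k \<times> 'k" where
  "image_coords z = (entry l1 u1 * fst (p1_coords z) + entry l1 u2 * snd (p1_coords z),
    entry l2 u1 * fst (p1_coords z) + entry l2 u2 * snd (p1_coords z))"

definition fibre_map :: "'k option \<Rightarrow> 'k \<Rightarrow> 'k" where
  "fibre_map z t = (entry l3 u1 * fst (p1_coords z) + entry l3 u2 * snd (p1_coords z) + \<mu> * t)
    / p1_scale (fst (image_coords z)) (snd (image_coords z))"

lemma Q_comb: "Q (comb x y z) = binary_form x y"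
  by (simp add: comb_def Q_frame binary_form_def)

lemma binary_form_smult: "binary_form (s * x) (s * y) = s * s * binary_form x y"
  by (simp add: binary_form_def algebra_simps)

lemma eigenvalue_nonzero: "\<mu> \<noteq> 0"
proof -
  have "u3 \<noteq> 0" using dual(9) by auto
  then show ?thesis using conic_iso_nonzero[OF iso] eigen by force
qed

lemma M_comb:
  "M *v comb x y t = comb (entry l1 u1 * x + entry l1 u2 * y) (entry l2 u1 * x + entry l2 u2 * y)
    (entry l3 u1 * x + entry l3 u2 * y + \<mu> * t)"
proof -
  have "linform l (M *v comb x y t) = x * entry l u1 + y * entry l u2 + t * (\<mu> * linform l u3)"
    for l
    using linform_matrix_comb eigen by (simp add: entry_def)
  then show ?thesis
    using comb_linform[of "M *v comb x y t"] by (simp add: dual mult.commute)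
qed

lemma det_nonzero: "entry l1 u1 * entry l2 u2 \<noteq> entry l1 u2 * entry l2 u1"
proof
  assume "entry l1 u1 * entry l2 u2 = entry l1 u2 * entry l2 u1"
  then obtain x y where xy: "(x, y) \<noteq> (0, 0)" "entry l1 u1 * x + entry l1 u2 * y = 0"
    "entry l2 u1 * x + entry l2 u2 * y = 0"
    unfolding singular_2x2_iff by blast
  have "M *v comb x y 0 = M *v comb 0 0 ((entry l3 u1 * x + entry l3 u2 * y) / \<mu>)"
    using xy(2,3) eigenvalue_nonzero by (simp add: M_comb)
  then have "comb x y 0 = comb 0 0 ((entry l3 u1 * x + entry l3 u2 * y) / \<mu>)"
    using iso inj_matrix_vector_mult unfolding conic_iso_def by (metis injD)
  then show False using xy(1) by (simp add: comb_eq_iff)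
qed

lemma linform_lift_point:
  "linform l1 (lift_point zt) = fst (p1_coords (fst zt))"
  "linform l2 (lift_point zt) = snd (p1_coords (fst zt))"
  "linform l3 (lift_point zt) = snd zt"
  by (simp_all add: lift_point_def)

lemma lift_point_nonzero: "lift_point zt \<noteq> 0"
  using p1_coords_nonzero[of "fst zt"] by (auto simp: lift_point_def comb_eq_0_iff prod_eq_iff)

lemma proj_point_eq_chart:
  assumes "Q v = 0" "(linform l1 v, linform l2 v) \<noteq> (0, 0)"
  shows "p1_point (linform l1 v) (linform l2 v) \<in> zeros"
    "proj_point v = chart (p1_point (linform l1 v) (linform l2 v),
      linform l3 v / p1_scale (linform l1 v) (linform l2 v))"
proof -
  define x y t where "x = linform l1 v" and "y = linform l2 v" and "t = linform l3 v"
  define s where "s = p1_scale x y"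
  have "(x, y) \<noteq> (0, 0)" using assms(2) by (simp add: x_def y_def)
  then have "s \<noteq> 0" and coords: "p1_coords (p1_point x y) = (x / s, y / s)"
    using p1_scale_nonzero p1_coords_point by (simp_all add: s_def)
  have v: "v = comb x y t" using comb_linform[of v] by (simp add: x_def y_def t_def)
  then have "binary_form x y = 0" using assms(1) by (simp add: Q_comb)
  then have "binary_form (x / s) (y / s) = 0"
    using binary_form_smult[of "inverse s" x y] by (simp add: divide_inverse mult.commute)
  then show "p1_point (linform l1 v) (linform l2 v) \<in> zeros"
    by (simp add: zeros_def coords flip: x_def y_def)
  have "v = s *s lift_point (p1_point x y, t / s)"
    using v \<open>s \<noteq> 0\<close> by (simp add: lift_point_def coords smult_comb)
  then have "proj_point v = chart (p1_point x y, t / s)"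
    using \<open>s \<noteq> 0\<close> by (simp add: chart_def proj_point_smult)
  then show "proj_point v = chart (p1_point (linform l1 v) (linform l2 v),
      linform l3 v / p1_scale (linform l1 v) (linform l2 v))"
    by (simp add: x_def y_def t_def s_def)
qed

lemma conic_points_eq: "conic_points Q = insert (proj_point u3) (chart ` (zeros \<times> UNIV))"
proof (intro equalityI subsetI)
  fix P assume "P \<in> conic_points Q"
  then obtain v where v: "P = proj_point v" "v \<noteq> 0" "Q v = 0" by (rule conic_pointsE)
  show "P \<in> insert (proj_point u3) (chart ` (zeros \<times> UNIV))"
  proof (cases "(linform l1 v, linform l2 v) = (0, 0)")
    case True
    then have "v = linform l3 v *s u3" using comb_linform[of v] by (simp add: comb_def)
    moreover from this have "linform l3 v \<noteq> 0" using v(2) by auto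
    ultimately have "P = proj_point u3" using v(1) proj_point_smult by metis
    then show ?thesis by simp
  next
    case False
    then show ?thesis using proj_point_eq_chart[OF v(3) False] v(1) by auto
  qed
next
  fix P assume "P \<in> insert (proj_point u3) (chart ` (zeros \<times> UNIV))"
  moreover have "Q u3 = 0" using Q_comb[of 0 0 1] by (simp add: comb_def binary_form_def)
  moreover have "Q (lift_point zt) = 0" if "fst zt \<in> zeros" for zt
    using that by (simp add: lift_point_def Q_comb zeros_def)
  moreover have "u3 \<noteq> 0" using dual(9) by auto
  ultimately show "P \<in> conic_points Q"
    using lift_point_nonzero by (auto simp: conic_points_def chart_def)
qed

lemma vertex_not_in_chart: "proj_point u3 \<notin> range chart"
proof
  assume "proj_point u3 \<in> range chart"
  then obtain zt where "proj_point u3 = proj_point (lift_point zt)" unfolding chart_def by blast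
  then obtain c where "lift_point zt = c *s u3" unfolding proj_point_eq_iff by blast
  then show False
    using linform_lift_point[of zt] p1_coords_nonzero[of "fst zt"] by (simp add: dual prod_eq_iff)
qed

lemma inj_chart: "inj chart"
proof (rule injI)
  fix zt zt' assume "chart zt = chart zt'"
  then obtain c where c: "c \<noteq> 0" "lift_point zt' = c *s lift_point zt"
    unfolding chart_def proj_point_eq_iff by blast
  then have lin: "linform l (lift_point zt') = c * linform l (lift_point zt)" for l by simp
  have coords: "p1_coords (fst zt') = (c * fst (p1_coords (fst zt)), c * snd (p1_coords (fst zt)))"
    and "snd zt' = c * snd zt"
    using lin[of l1] lin[of l2] lin[of l3] by (simp_all add: linform_lift_point prod_eq_iff)
  moreover have "fst zt' = fst zt"
    using c(1) p1_point_coords[of "fst zt'"] by (simp add: coords p1_point_smult)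
  moreover from calculation have "c = 1"
    using p1_coords_nonzero[of "fst zt"] by (auto simp: prod_eq_iff)
  ultimately show "zt = zt'" by (simp add: prod_eq_iff)
qed

lemma image_coords_nonzero: "image_coords z \<noteq> (0, 0)"
proof -
  obtain x y where "p1_coords z = (x, y)" by force
  moreover from this have "(x, y) \<noteq> (0, 0)" using p1_coords_nonzero[of z] by simp
  ultimately show ?thesis
    using det_nonzero singular_2x2_iff[of "entry l1 u1" "entry l2 u2" "entry l1 u2" "entry l2 u1"]
    by (auto simp: image_coords_def)
qed

lemma chart_action:
  assumes "z \<in> zeros"
  shows "base_map z \<in> zeros" "proj_map M (chart (z, t)) = chart (base_map z, fibre_map z t)"
proof -
  have "Q (M *v lift_point (z, t)) = 0"
    using assms conic_iso_zero[OF iso] by (simp add: zeros_def lift_point_def Q_comb)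
  moreover have "M *v lift_point (z, t) = comb (fst (image_coords z)) (snd (image_coords z))
      (entry l3 u1 * fst (p1_coords z) + entry l3 u2 * snd (p1_coords z) + \<mu> * t)"
    by (simp add: lift_point_def M_comb image_coords_def)
  moreover have "base_map z = p1_point (fst (image_coords z)) (snd (image_coords z))"
  proof -
    obtain x y where xy: "p1_coords z = (x, y)" by force
    then have "(x, y) \<noteq> (0, 0)" "p1_point x y = z"
      using p1_coords_nonzero[of z] p1_point_coords[of z] by simp_all
    then show ?thesis using moebius_p1_point by (metis image_coords_def xy fst_conv snd_conv)
  qed
  ultimately show "base_map z \<in> zeros"
    "proj_map M (chart (z, t)) = chart (base_map z, fibre_map z t)"
    using proj_point_eq_chart[of "M *v lift_point (z, t)"] image_coords_nonzero[of z]
    by (simp_all add: proj_map_proj_point chart_def fibre_map_def prod_eq_iff)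
qed

lemma base_map_permutes: "restrict_id base_map zeros permutes zeros"
proof -
  have "inj_on base_map zeros"
    using permutes_inj[OF moebius_even(1)[OF det_nonzero]] inj_on_subset by blast
  moreover have "base_map ` zeros \<subseteq> zeros" using chart_action(1) by blast
  ultimately have "bij_betw base_map zeros zeros"
    using endo_inj_surj[of zeros] by (simp add: bij_betw_def)
  then show ?thesis by (rule permutes_restrict_id)
qed

lemma fibre_map_affine:
  assumes "z \<in> zeros"
  shows "fibre_map z permutes UNIV" "evenperm (fibre_map z)"
proof -
  define s where "s = p1_scale (fst (image_coords z)) (snd (image_coords z))"
  have eq: "fibre_map z =
      (\<lambda>t. (\<mu> / s) * t + (entry l3 u1 * fst (p1_coords z) + entry l3 u2 * snd (p1_coords z)) / s)"
    by (simp add: fibre_map_def fun_eq_iff s_def add_divide_distrib add_ac)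
  have "\<mu> / s \<noteq> 0"
    using eigenvalue_nonzero p1_scale_nonzero image_coords_nonzero[of z]
    by (simp add: s_def prod_eq_iff)
  then show "fibre_map z permutes UNIV" "evenperm (fibre_map z)"
    unfolding eq by (rule affine_permutes, rule evenperm_affine)
qed

text \<open>The induced permutation, transported to \<open>zeros \<times> UNIV\<close>, first applies an affine map on each
  fibre and then permutes the fibres; the latter is even because each fibre has an even number
  of points.\<close>
definition transported_perm :: "'k option \<times> 'k \<Rightarrow> 'k option \<times> 'k" where
  "transported_perm = (\<lambda>(z, t). (restrict_id base_map zeros z, t))
    \<circ> (\<lambda>(z, t). (z, if z \<in> zeros then fibre_map z t else t))"

lemma transported_perm: "transported_perm permutes zeros \<times> UNIV" "evenperm transported_perm"
proof -
  have fin: "finite (zeros \<times> (UNIV :: 'k set))" by simp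
  have lift: "(\<lambda>(z, t::'k). (restrict_id base_map zeros z, t)) permutes zeros \<times> UNIV"
    "evenperm (\<lambda>(z, t::'k). (restrict_id base_map zeros z, t))"
    using evenperm_lift[OF _ base_map_permutes even_card] by simp_all
  have fibres: "(\<lambda>(z, t). (z, if z \<in> zeros then fibre_map z t else t)) permutes zeros \<times> UNIV"
    "evenperm (\<lambda>(z, t). (z, if z \<in> zeros then fibre_map z t else t))"
    using evenperm_fibrewise[of zeros "\<lambda>_. UNIV" fibre_map] fibre_map_affine by simp_all
  show "transported_perm permutes zeros \<times> UNIV" "evenperm transported_perm"
    unfolding transported_perm_def using permutes_compose[OF fibres(1) lift(1)] lift(2) fibres(2)
      evenperm_comp[OF permutes_imp_permutation[OF fin lift(1)]
        permutes_imp_permutation[OF fin fibres(1)]]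
    by simp_all
qed

theorem evenperm_conic_perm: "evenperm (restrict_id (proj_map M) (conic_points Q))"
proof -
  have "restrict_id (proj_map M) (conic_points Q) (chart (z, t)) = chart (transported_perm (z, t))"
    if "z \<in> zeros" for z t
  proof -
    have "chart (z, t) \<in> conic_points Q" using that conic_points_eq by blast
    then show ?thesis using that chart_action by (simp add: transported_perm_def)
  qed
  moreover have "restrict_id (proj_map M) (conic_points Q) y = y"
    if "y \<notin> chart ` (zeros \<times> UNIV)" for y
  proof (cases "y = proj_point u3")
    case True
    then show ?thesis
      using eigen eigenvalue_nonzero
      by (simp add: restrict_id_def proj_map_proj_point proj_point_smult)
  next
    case False
    then show ?thesis using that conic_points_eq by simp
  qed
  ultimately show ?thesis
    using evenperm_transport(2)[OF _ inj_on_subset[OF inj_chart] transported_perm(1)]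
      transported_perm(2)
    by fastforce
qed

theorem odd_card_conic_points: "odd (card (conic_points Q))"
proof -
  have "proj_point u3 \<notin> chart ` (zeros \<times> UNIV)" using vertex_not_in_chart by blast
  then have "card (conic_points Q) = Suc (card (zeros \<times> (UNIV :: 'k set)))"
    unfolding conic_points_eq using card_image[OF inj_on_subset[OF inj_chart]] by simp
  then have "card (conic_points Q) = Suc (card zeros * CARD('k))"
    by (simp add: card_cartesian_product)
  then show ?thesis using even_card by simp
qed

end

context char2_field
begin

lemma quad_form_lincomb:
  assumes "Q = quad_form a11 a22 a33 a12 a13 a23"
  shows "Q (x *s u + y *s v + z *s w) = x * x * Q u + y * y * Q v + z * z * Q (w::'k^3)
    + x * y * polar Q u v + x * z * polar Q u w + y * z * polar Q v w"
proof -
  have sum: "Q (u + v) = Q u + Q v + polar Q u v" for u v by (simp add: polar_def)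
  have smult: "Q (c *s u) = c * c * Q u" for c u by (simp add: assms quad_form_smult)
  have bilinear: "polar Q (u + u') v = polar Q u v + polar Q u' v"
    "polar Q v (u + u') = polar Q v u + polar Q v u'"
    "polar Q (c *s u) v = c * polar Q u v" "polar Q v (c *s u) = c * polar Q v u" for c u u' v
    unfolding assms using polar_add_left polar_smult_left polar_commute by metis+
  show ?thesis by (simp add: sum smult bilinear algebra_simps)
qed

lemma conic_parity_double_line:
  fixes Q :: "'k^3 \<Rightarrow> 'k" and M :: "'k^3^3"
  assumes "conic_iso Q Q M" "\<And>v. Q v = linform l v * linform l v" "l \<noteq> 0"
  shows "odd (card (conic_points Q))" "evenperm (restrict_id (proj_map M) (conic_points Q))"
proof -
  obtain u1 u2 u3 l1 l2 where "dual_frame u1 u2 u3 l1 l2 l"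
    using dual_frame_annihilating[OF assms(3)] by blast
  then interpret char2_frame field_type u1 u2 u3 l1 l2 l
    by (rule char2_frame.intro[OF char2_field_axioms])
  have linform_M: "linform l' (M *v v) =
      linform l' (M *v u1) * linform l1 v + linform l' (M *v u2) * linform l2 v"
    if "Q v = 0" for l' v
    using that linform_matrix_comb[of l' M "linform l1 v" "linform l2 v" "linform l v"]
      comb_linform[of v]
    by (simp add: assms(2) mult.commute)
  have "Q (x *s u1 + y *s u2 + z *s u3) = 0 * x * x + 0 * y * y + 0 * x * y + 1 * z * z" for x y z
    using linform_comb(3)[of x y z] by (simp add: assms(2) comb_def)
  then interpret graph_conic field_type u1 u2 u3 l1 l2 l Q M 0 0 0 1
    "linform l1 (M *v u1)" "linform l1 (M *v u2)" "linform l2 (M *v u1)" "linform l2 (M *v u2)"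
    by (intro graph_conic.intro graph_conic_axioms.intro char2_frame.intro char2_field_axioms
        dual_frame_axioms assms(1) linform_M) simp_all
  show "odd (card (conic_points Q))" "evenperm (restrict_id (proj_map M) (conic_points Q))"
    using card_conic_points even_card evenperm_conic_perm by simp_all
qed

text \<open>When the nucleus \<open>r\<close> is nonzero, it spans the radical of the polar form, so \<open>M\<close> fixes it
  projectively; the conic is smooth if \<open>Q r \<noteq> 0\<close> and a pair of lines through \<open>r\<close> otherwise.\<close>
lemma conic_parity_nucleus:
  fixes Q :: "'k^3 \<Rightarrow> 'k" and M :: "'k^3^3"
  assumes Q: "Q = quad_form a11 a22 a33 a12 a13 a23" and iso: "conic_iso Q Q M"
    and r: "nucleus a12 a13 a23 \<noteq> 0"
  shows "odd (card (conic_points Q))" "evenperm (restrict_id (proj_map M) (conic_points Q))"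
proof -
  define r where "r = nucleus a12 a13 a23"
  obtain u1 u2 l1 l2 l3 where "dual_frame u1 u2 r l1 l2 l3"
    using dual_frame_through r unfolding r_def by blast
  then interpret char2_frame field_type u1 u2 r l1 l2 l3
    by (rule char2_frame.intro[OF char2_field_axioms])
  obtain \<mu> where eigen: "M *v r = \<mu> *s r"
    using nucleus_eigenvector[OF Q iso r] unfolding r_def by blast
  have "polar Q u r = 0" for u
    using polar_commute[of a11 a22 a33 a12 a13 a23 u r] polar_nucleus[of a11 a22 a33 a12 a13 a23 u]
    by (simp add: Q r_def)
  then have Q_frame: "Q (x *s u1 + y *s u2 + z *s r)
      = Q u1 * x * x + Q u2 * y * y + polar Q u1 u2 * x * y + Q r * z * z" for x y z
    by (simp add: quad_form_lincomb[OF Q] mult_ac)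
  have "odd (card (conic_points Q)) \<and> evenperm (restrict_id (proj_map M) (conic_points Q))"
  proof (cases "Q r = 0")
    case True
    then interpret line_pair_conic field_type u1 u2 r l1 l2 l3 Q M "Q u1" "Q u2" "polar Q u1 u2" \<mu>
      by (intro line_pair_conic.intro line_pair_conic_axioms.intro char2_frame.intro
          char2_field_axioms dual_frame_axioms iso eigen) (simp add: Q_frame)
    show ?thesis using odd_card_conic_points evenperm_conic_perm by simp
  next
    case False
    have linform_M: "linform l (M *v v) =
        linform l (M *v u1) * linform l1 v + linform l (M *v u2) * linform l2 v"
      if "linform l r = 0" for l v
      using linform_matrix_comb[of l M "linform l1 v" "linform l2 v" "linform l3 v"] eigen that
      by (simp add: comb_linform mult.commute)
    interpret graph_conic field_type u1 u2 r l1 l2 l3 Q M "Q u1" "Q u2" "polar Q u1 u2" "Q r"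
      "linform l1 (M *v u1)" "linform l1 (M *v u2)" "linform l2 (M *v u1)" "linform l2 (M *v u2)"
      by (intro graph_conic.intro graph_conic_axioms.intro char2_frame.intro char2_field_axioms
          dual_frame_axioms iso False Q_frame linform_M dual)
    show ?thesis using card_conic_points even_card evenperm_conic_perm by simp
  qed
  then show "odd (card (conic_points Q))" "evenperm (restrict_id (proj_map M) (conic_points Q))"
    by simp_all
qed

theorem conic_parity:
  fixes Q :: "'k^3 \<Rightarrow> 'k" and M :: "'k^3^3"
  assumes "is_conic Q" "conic_iso Q Q M"
  shows "odd (card (conic_points Q))" "evenperm (restrict_id (proj_map M) (conic_points Q))"
proof -
  have "is_quadratic_form Q" using assms(1) by (simp add: is_conic_def)
  then obtain a11 a22 a33 a12 a13 a23 where Q: "Q = quad_form a11 a22 a33 a12 a13 a23"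
    by (rule quadratic_form_eq_quad_form)
  have "odd (card (conic_points Q)) \<and> evenperm (restrict_id (proj_map M) (conic_points Q))"
  proof (cases "nucleus a12 a13 a23 = 0")
    case True
    then obtain l where l: "\<And>v. Q v = linform l v * linform l v"
      using quad_form_square[OF Q] by blast
    moreover have "l \<noteq> 0" using assms(1) l by (auto simp: is_conic_def fun_eq_iff linform_def)
    ultimately show ?thesis using conic_parity_double_line[OF assms(2)] by blast
  next
    case False
    then show ?thesis using conic_parity_nucleus[OF Q assms(2)] by blast
  qed
  then show "odd (card (conic_points Q))" "evenperm (restrict_id (proj_map M) (conic_points Q))"
    by simp_all
qed

end

lemma char2_field_of_card:
  assumes "CARD('k::{field,finite}) = 2 ^ m" "2 ^ m \<ge> (4::nat)"
  shows "char2_field TYPE('k)"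
proof
  show "(2::'k) = 0"
  proof (rule ccontr)
    assume "(2::'k) \<noteq> 0"
    have "- x = x \<longleftrightarrow> x = 0" for x :: 'k
    proof
      assume "- x = x"
      then have "2 * x = 0" by (metis add.right_inverse mult_2)
      then show "x = 0" using \<open>(2::'k) \<noteq> 0\<close> by simp
    qed simp
    then have "{x::'k. - x \<noteq> x} = UNIV - {0}" by auto
    moreover have "(uminus :: 'k \<Rightarrow> 'k) permutes UNIV" by (rule permutes_involution) simp_all
    ultimately have "even (card (UNIV - {0::'k}))"
      using evenperm_involution(1)[of UNIV "uminus :: 'k \<Rightarrow> 'k"] by simp
    moreover have "m \<noteq> 0" using assms(2) by (cases m) auto
    ultimately show False using assms(1) by (simp add: card_Diff_subset)
  qed
  have "m \<ge> 2" using assms(2) by (cases m; cases "m - 1") auto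
  then obtain j where "m = j + 2" by (metis le_add_diff_inverse2)
  then show "4 dvd CARD('k)" using assms(1) by (simp add: power_add)
qed

definition induced_by_iso ::
    "('b \<Rightarrow> 'k::field^3 \<Rightarrow> 'k) \<Rightarrow> 'b \<Rightarrow> 'b \<Rightarrow> (('k^3) set \<Rightarrow> ('k^3) set) \<Rightarrow> bool" where
  "induced_by_iso Q i j g \<longleftrightarrow> (\<exists>M. conic_iso (Q i) (Q j) M \<and> g = proj_map M)"

lemma (in char2_field) fibred_groupoid_conics:
  fixes Q :: "'b \<Rightarrow> 'k^3 \<Rightarrow> 'k"
  assumes "finite B" "\<forall>i\<in>B. is_conic (Q i)"
  shows "fibred_groupoid B (\<lambda>i. conic_points (Q i)) (induced_by_iso Q)"
proof
  have quadratic: "is_quadratic_form (Q i)" if "i \<in> B" for i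
    using assms(2) that by (simp add: is_conic_def)
  show "finite B" by (rule assms(1))
  show "finite (conic_points (Q i))" for i by simp
  show "odd (card (conic_points (Q i)))" if "i \<in> B" for i
    using conic_parity(1)[OF _ conic_iso_mat_1] assms(2) that by blast
  show "induced_by_iso Q i i id" for i
    using conic_iso_mat_1 by (auto simp: induced_by_iso_def fun_eq_iff intro!: exI[of _ "mat 1"])
  show "g P \<in> conic_points (Q j)"
    if "j \<in> B" "induced_by_iso Q i j g" "P \<in> conic_points (Q i)" for i j g P
    using that conic_iso_proj_map[OF quadratic] by (auto simp: induced_by_iso_def)
  show "induced_by_iso Q i k (h \<circ> g)"
    if "induced_by_iso Q i j g" "induced_by_iso Q j k h" for i j k g h
    using that conic_iso_mult by (fastforce simp: induced_by_iso_def fun_eq_iff proj_map_mult)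
  show "\<exists>g'. induced_by_iso Q j i g' \<and> (\<forall>x\<in>conic_points (Q i). g' (g x) = x)
      \<and> (\<forall>y\<in>conic_points (Q j). g (g' y) = y)"
    if adm: "induced_by_iso Q i j g" for i j g
  proof -
    obtain M where M: "conic_iso (Q i) (Q j) M" "g = proj_map M"
      using adm by (auto simp: induced_by_iso_def)
    obtain M' where "conic_iso (Q j) (Q i) M'" "M' ** M = mat 1" "M ** M' = mat 1"
      using conic_iso_inverse[OF M(1)] by blast
    then show ?thesis
      using M(2) by (intro exI[of _ "proj_map M'"]) (auto simp: induced_by_iso_def proj_map_mult)
  qed
  show "evenperm (restrict_id g (conic_points (Q i)))"
    if "i \<in> B" "induced_by_iso Q i i g" for i g
    using that assms(2) conic_parity(2) by (auto simp: induced_by_iso_def)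
qed

lemma induced_perm_fibre:
  assumes "i \<in> B" "conic_points (Q i) \<noteq> {}"
    and "\<exists>j\<in>B. \<sigma> ` ({i} \<times> conic_points (Q i)) = {j} \<times> conic_points (Q j)"
  shows "induced_perm B Q \<sigma> i \<in> B"
    "\<sigma> ` ({i} \<times> conic_points (Q i)) =
      {induced_perm B Q \<sigma> i} \<times> conic_points (Q (induced_perm B Q \<sigma> i))"
proof -
  obtain j where j: "j \<in> B" "\<sigma> ` ({i} \<times> conic_points (Q i)) = {j} \<times> conic_points (Q j)"
    using assms(3) ..
  have "(SOME P. P \<in> conic_points (Q i)) \<in> conic_points (Q i)"
    using assms(2) by (simp add: some_in_eq)
  then have "\<sigma> (i, SOME P. P \<in> conic_points (Q i)) \<in> {j} \<times> conic_points (Q j)"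
    using j(2) by blast
  then have "induced_perm B Q \<sigma> i = j" using assms(1) by (auto simp: induced_perm_def)
  then show "induced_perm B Q \<sigma> i \<in> B"
    "\<sigma> ` ({i} \<times> conic_points (Q i)) =
      {induced_perm B Q \<sigma> i} \<times> conic_points (Q (induced_perm B Q \<sigma> i))"
    using j by simp_all
qed

lemma induced_perm_permutes:
  assumes "finite B" "\<And>i. i \<in> B \<Longrightarrow> conic_points (Q i) \<noteq> {}"
    and "\<sigma> permutes Sigma B (\<lambda>i. conic_points (Q i))"
    and "\<And>i. i \<in> B \<Longrightarrow> \<sigma> ` ({i} \<times> conic_points (Q i))
      = {induced_perm B Q \<sigma> i} \<times> conic_points (Q (induced_perm B Q \<sigma> i))"
    and "\<And>i. i \<in> B \<Longrightarrow> induced_perm B Q \<sigma> i \<in> B"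
  shows "induced_perm B Q \<sigma> permutes B"
proof (rule bij_imp_permutes)
  have "inj_on (induced_perm B Q \<sigma>) B"
  proof (rule inj_onI)
    fix i i' assume i: "i \<in> B" "i' \<in> B" "induced_perm B Q \<sigma> i = induced_perm B Q \<sigma> i'"
    then have "\<sigma> ` ({i} \<times> conic_points (Q i)) = \<sigma> ` ({i'} \<times> conic_points (Q i'))"
      using assms(4) by metis
    then have "{i} \<times> conic_points (Q i) = {i'} \<times> conic_points (Q i')"
      using permutes_inj[OF assms(3)] by (simp add: inj_image_eq_iff)
    then show "i = i'" using assms(2)[OF i(1)] by blast
  qed
  moreover have "induced_perm B Q \<sigma> ` B \<subseteq> B" using assms(5) by blast
  ultimately show "bij_betw (induced_perm B Q \<sigma>) B B"
    using endo_inj_surj[OF assms(1)] by (simp add: bij_betw_def)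
qed (simp add: induced_perm_def)

theorem lemma3p16:
  fixes m :: nat and B :: "'b set" and Q :: "'b \<Rightarrow> ('k::{field,finite})^3 \<Rightarrow> 'k"
    and \<sigma> :: "'b \<times> ('k^3) set \<Rightarrow> 'b \<times> ('k^3) set"
  assumes "CARD('k) = 2 ^ m" and "2 ^ m \<ge> (4::nat)"
    and "finite B"
    and "\<forall>i\<in>B. is_conic (Q i)"
    and "\<sigma> permutes (Sigma B (\<lambda>i. conic_points (Q i)))"
    and "\<forall>i\<in>B. \<exists>j\<in>B. \<sigma> ` ({i} \<times> conic_points (Q i)) = {j} \<times> conic_points (Q j)"
    and "\<forall>i\<in>B. \<forall>j\<in>B. \<sigma> ` ({i} \<times> conic_points (Q i)) = {j} \<times> conic_points (Q j) \<longrightarrow>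
           (\<exists>M. conic_iso (Q i) (Q j) M \<and>
                (\<forall>P\<in>conic_points (Q i). \<sigma> (i, P) = (j, (\<lambda>v. M *v v) ` P)))"
  shows "evenperm \<sigma> = evenperm (induced_perm B Q \<sigma>)"
proof -
  interpret char2_field "TYPE('k)" using assms(1,2) by (rule char2_field_of_card)
  interpret fibred_groupoid B "\<lambda>i. conic_points (Q i)" "induced_by_iso Q"
    using assms(3,4) by (rule fibred_groupoid_conics)
  have nonempty: "conic_points (Q i) \<noteq> {}" if "i \<in> B" for i
    using odd_card_fibre[OF that] by (intro notI) simp
  note fibre = induced_perm_fibre[OF _ nonempty bspec[OF assms(6)]]
  have "fibred_over \<sigma> (induced_perm B Q \<sigma>)"
    using assms(7) fibre unfolding fibred_over_def induced_by_iso_def by fast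
  moreover have "induced_perm B Q \<sigma> permutes B"
    by (rule induced_perm_permutes[OF assms(3) nonempty assms(5) fibre(2) fibre(1)])
  ultimately show ?thesis using evenperm_fibred[OF assms(5)] by blast
qed

end
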